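(* Let $n\ge2$, $\alpha>0$, and let $\Omega\in L^1(\mathbf S^{n-1})$ have mean value zero and satisfy $\sup_{\xi\in \mathbf S^{n-1}}\int_{\mathbf S^{n-1}} |\Omega(\theta)|(\ln\frac{1}{|\theta\cdot\xi|})^{1+\alpha}d\theta<\infty$. Let $\sigma_k(x)=\frac{\Omega(x/|x|)}{|x|^n}\chi_{\{2^k\le|x|\le 2^{k+1}\}}(x)$ for $k\in\mathbb Z$, and define the maximal operator $\sigma^*(f)=\sup_{k\in\mathbb Z}(|\sigma_k|*|f|)$. Then for every $p$ with $\frac{2+\alpha}{1+\alpha}<p<2+\alpha$ there is $C$ with $\|\sigma^*(f)\|_{L^p(\mathbb R^n)}\le C\|f\|_{L^p(\mathbb R^n)}$ for all $f\in L^p(\mathbb R^n)$. *)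

theory Defs
  imports "HOL-Analysis.Analysis"
begin

text \<open>Surface measure on the unit sphere S^{n-1} of a Euclidean space, defined by the
  polar-coordinate identity: sigma(A) = n * |{x : 0 < |x| < 1, x/|x| \<in> A}|.\<close>
definition sphere_measure :: "'a::euclidean_space measure" where
  "sphere_measure =
     density
       (distr (restrict_space lborel (ball 0 1 - {0})) (restrict_space borel (sphere 0 1))
              (\<lambda>x. x /\<^sub>R norm x))
       (\<lambda>_. ennreal (real DIM('a)))"

definition enn_powr :: "ennreal \<Rightarrow> real \<Rightarrow> ennreal" where
  "enn_powr x p = (if x = \<infinity> then \<infinity> else ennreal (enn2real x powr p))"

definition sigma_k :: "('a::euclidean_space \<Rightarrow> real) \<Rightarrow> int \<Rightarrow> 'a \<Rightarrow> real" where
  "sigma_k \<Omega> k x =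
     (if 2 powr real_of_int k \<le> norm x \<and> norm x \<le> 2 powr real_of_int (k + 1)
      then \<Omega> (x /\<^sub>R norm x) / norm x ^ DIM('a) else 0)"

definition sigma_star :: "('a::euclidean_space \<Rightarrow> real) \<Rightarrow> ('a \<Rightarrow> real) \<Rightarrow> 'a \<Rightarrow> ennreal" where
  "sigma_star \<Omega> f x =
     (SUP k\<in>(UNIV::int set). \<integral>\<^sup>+ y. ennreal (\<bar>sigma_k \<Omega> k (x - y)\<bar> * \<bar>f y\<bar>) \<partial>lebesgue)"

definition Lp_norm :: "real \<Rightarrow> ('a::euclidean_space \<Rightarrow> real) \<Rightarrow> ennreal" where
  "Lp_norm p f = enn_powr (\<integral>\<^sup>+ x. ennreal (\<bar>f x\<bar> powr p) \<partial>lebesgue) (1 / p)"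

definition Lp_norm_enn :: "real \<Rightarrow> ('a::euclidean_space \<Rightarrow> ennreal) \<Rightarrow> ennreal" where
  "Lp_norm_enn p g = enn_powr (\<integral>\<^sup>+ x. enn_powr (g x) p \<partial>lebesgue) (1 / p)"

end

theory Submission
  imports Defs
begin

text \<open>Method of rotations. In polar coordinates \<open>y = r \<theta>\<close> the Jacobian \<open>r^(n-1)\<close> cancels the
  factor \<open>|y|^-n\<close> of \<open>\<sigma>_k\<close> up to \<open>1/r \<le> 2^-k\<close>, so that
  \<open>(|\<sigma>_k| * |f|)(x) \<le> \<integral>\<^bsub>S^(n-1)\<^esub> |\<Omega>(\<theta>)| \<integral>\<^sub>1\<^sup>2 |f|(x - t 2^k \<theta>) dt d\<theta>\<close>
  and \<open>\<sigma>^* f\<close> is dominated by \<open>\<integral> |\<Omega>(\<theta>)| M\<^sub>\<theta> f d\<theta>\<close>, where \<open>M\<^sub>\<theta>\<close> is the dyadic maximal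
  function in the direction \<open>\<theta>\<close>. Jensen's inequality for the finite measure \<open>|\<Omega>| d\<theta>\<close> and Fubini
  reduce the \<open>L^p\<close> bound to a bound for \<open>M\<^sub>\<theta>\<close> that is uniform in \<open>\<theta>\<close>. Such a bound holds
  for every \<open>p > 1\<close>: \<open>M\<^sub>\<theta>\<close> is controlled by an average of one-dimensional discrete forward
  maximal functions along the lattices \<open>x - \<nat> \<theta>\<close>; these satisfy a weak (1,1) estimate by a greedy
  covering, hence a strong (p,p) estimate by the layer-cake formula, and translation invariance of
  Lebesgue measure transfers the estimate to \<open>\<real>^n\<close>.\<close>

section \<open>Powers of extended nonnegative reals\<close>

lemma enn_powr_ennreal: "t \<ge> 0 \<Longrightarrow> enn_powr (ennreal t) p = ennreal (t powr p)"
  by (simp add: enn_powr_def)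

lemma enn_powr_0 [simp]: "enn_powr 0 p = 0"
  by (simp add: enn_powr_def)

lemma enn_powr_top [simp]: "enn_powr top p = top"
  by (simp add: enn_powr_def)

lemma enn_powr_mono: "p > 0 \<Longrightarrow> x \<le> y \<Longrightarrow> enn_powr x p \<le> enn_powr y p"
  by (cases x rule: ennreal_cases; cases y rule: ennreal_cases) (auto simp: enn_powr_def powr_mono2 top_unique)

lemma enn_powr_strict_mono: "p > 0 \<Longrightarrow> x < y \<Longrightarrow> enn_powr x p < enn_powr y p"
  by (cases x rule: ennreal_cases; cases y rule: ennreal_cases)
     (auto simp: enn_powr_def ennreal_less_iff powr_less_mono2)

lemma enn_powr_le_iff: "p > 0 \<Longrightarrow> enn_powr x p \<le> enn_powr y p \<longleftrightarrow> x \<le> y"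
  by (meson enn_powr_mono enn_powr_strict_mono not_le)

lemma enn_powr_eq_0_iff: "p > 0 \<Longrightarrow> enn_powr x p = 0 \<longleftrightarrow> x = 0"
  using enn_powr_le_iff[of p x 0] by simp

lemma enn_powr_powr: "p > 0 \<Longrightarrow> q > 0 \<Longrightarrow> enn_powr (enn_powr x p) q = enn_powr x (p * q)"
  by (cases x rule: ennreal_cases) (auto simp: enn_powr_def powr_powr)

lemma enn_powr_one [simp]: "enn_powr x 1 = x"
  by (cases x rule: ennreal_cases) (simp_all add: enn_powr_def)

lemma enn_powr_one_eq_one [simp]: "enn_powr 1 p = 1"
  by (simp add: enn_powr_def)

lemma enn_powr_mult: "p > 0 \<Longrightarrow> enn_powr (x * y) p = enn_powr x p * enn_powr y p"
  by (cases x rule: ennreal_cases; cases y rule: ennreal_cases)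
     (auto simp: enn_powr_def ennreal_mult[symmetric] powr_mult ennreal_mult_top ennreal_top_mult
        ennreal_mult_eq_top_iff)

lemma enn_powr_diff_one_mult: "p > 1 \<Longrightarrow> enn_powr x (p - 1) * x = enn_powr x p"
  by (cases x rule: ennreal_cases)
     (auto simp: enn_powr_def ennreal_mult[symmetric] powr_diff ennreal_top_mult)

lemma enn_powr_Sup:
  assumes "p > 0" shows "enn_powr (Sup S) p = (SUP x\<in>S. enn_powr x p)"
proof (rule antisym)
  show "(SUP x\<in>S. enn_powr x p) \<le> enn_powr (Sup S) p"
    by (rule SUP_least) (intro enn_powr_mono assms Sup_upper)
next
  define z where "z = enn_powr (SUP x\<in>S. enn_powr x p) (1/p)"
  have z: "enn_powr z p = (SUP x\<in>S. enn_powr x p)"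
    using assms by (simp add: z_def enn_powr_powr)
  have "Sup S \<le> z"
  proof (rule Sup_least)
    fix s assume "s \<in> S"
    then have "enn_powr s p \<le> enn_powr z p" unfolding z by (rule SUP_upper)
    then show "s \<le> z" using enn_powr_le_iff[OF assms] by blast
  qed
  then show "enn_powr (Sup S) p \<le> (SUP x\<in>S. enn_powr x p)"
    using enn_powr_mono[OF assms] z by metis
qed

lemma enn_powr_measurable [measurable]:
  assumes [measurable]: "f \<in> borel_measurable M"
  shows "(\<lambda>x. enn_powr (f x) p) \<in> borel_measurable M"
  unfolding enn_powr_def by measurable

section \<open>Jensen's inequality\<close>

lemma Young_tangent_bound:
  fixes t c p :: real
  assumes "t \<ge> 0" "c > 0" "p > 1"
  shows "t \<le> c powr (1 - p) * t powr p / p + (1 - 1/p) * c"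
proof -
  define q where "q = p / (p - 1)"
  have q: "q > 1" "1/p + 1/q = 1" "(p - 1) / p * q = 1"
    using assms unfolding q_def by (simp_all add: field_simps)
  define a where "a = t * c powr ((1 - p) / p)"
  define b where "b = c powr ((p - 1) / p)"
  have "a * b = t * c powr ((1 - p) / p + (p - 1) / p)"
    by (simp add: a_def b_def powr_add)
  also have "(1 - p) / p + (p - 1) / p = 0" by (simp add: add_divide_distrib[symmetric])
  finally have "t = a * b" using assms by simp
  also have "\<dots> \<le> a powr p / p + b powr q / q"
    using assms q by (intro Youngs_inequality) (simp_all add: a_def b_def)
  also have "a powr p = t powr p * c powr (1 - p)"
    using assms by (simp add: a_def powr_mult powr_powr)
  also have "b powr q = c"
    using assms q by (simp add: b_def powr_powr)
  finally show ?thesis using assms by (simp add: q_def field_simps)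
qed

lemma ennreal_le_tangent_bound:
  assumes "c > 0" "p > 1"
  shows "x \<le> ennreal (c powr (1 - p) / p) * enn_powr x p + ennreal ((1 - 1/p) * c)"
proof (cases x rule: ennreal_cases)
  case (real t)
  have "t \<le> c powr (1 - p) / p * t powr p + (1 - 1/p) * c"
    using Young_tangent_bound[OF real(1) assms] by simp
  then have "x \<le> ennreal (c powr (1 - p) / p * t powr p + (1 - 1/p) * c)"
    using real by (simp add: ennreal_leI)
  also have "\<dots> = ennreal (c powr (1 - p) / p) * enn_powr x p + ennreal ((1 - 1/p) * c)"
    using real assms
    by (simp add: enn_powr_ennreal ennreal_plus[symmetric] ennreal_mult[symmetric] del: ennreal_plus)
  finally show ?thesis .
next
  case top
  have "c powr (1 - p) / p > 0" using assms by simp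
  then show ?thesis using top assms by (simp add: ennreal_mult_top)
qed

\<comment> \<open>Integrate the tangent-line bound at the point \<open>c\<close> where it is sharp on average.\<close>
lemma nn_integral_le_tangent_choice:
  fixes h :: "'b \<Rightarrow> ennreal"
  assumes p: "p > 1" and [measurable]: "h \<in> borel_measurable M"
    and W: "emeasure M (space M) = ennreal w" "w > 0"
    and Q: "(\<integral>\<^sup>+x. enn_powr (h x) p \<partial>M) = ennreal q" "q > 0"
  shows "(\<integral>\<^sup>+x. h x \<partial>M) \<le> ennreal ((q / w) powr (1 / p) * w)"
proof -
  define c where "c = (q / w) powr (1 / p)"
  have c: "c > 0" "c powr p = q / w"
    unfolding c_def using W Q p by (simp_all add: powr_powr)
  have "(\<integral>\<^sup>+x. h x \<partial>M)
      \<le> (\<integral>\<^sup>+x. ennreal (c powr (1 - p) / p) * enn_powr (h x) p + ennreal ((1 - 1/p) * c) \<partial>M)"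
    by (intro nn_integral_mono ennreal_le_tangent_bound c p)
  also have "\<dots> = ennreal (c powr (1 - p) / p * q + (1 - 1/p) * c * w)"
    using W Q c p
    by (simp add: nn_integral_add nn_integral_cmult ennreal_plus[symmetric] ennreal_mult[symmetric]
        del: ennreal_plus)
  also have "c powr (1 - p) / p * q + (1 - 1/p) * c * w = c * w"
  proof -
    have "q = c powr p * w" using c W by (simp add: field_simps)
    then have "c powr (1 - p) * q = (c powr (1 - p) * c powr p) * w" by (simp only: mult.assoc)
    also have "c powr (1 - p) * c powr p = c" using c(1) by (simp flip: powr_add)
    finally show ?thesis using p by (simp add: field_simps)
  qed
  finally show ?thesis unfolding c_def .
qed

lemma enn_powr_nn_integral_le:
  fixes h :: "'b \<Rightarrow> ennreal"
  assumes p: "p > 1" and [measurable]: "h \<in> borel_measurable M"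
  shows "enn_powr (\<integral>\<^sup>+x. h x \<partial>M) p
     \<le> enn_powr (emeasure M (space M)) (p - 1) * (\<integral>\<^sup>+x. enn_powr (h x) p \<partial>M)"
proof -
  define W where "W = emeasure M (space M)"
  define Q where "Q = (\<integral>\<^sup>+x. enn_powr (h x) p \<partial>M)"
  have degenerate: "(\<integral>\<^sup>+x. h x \<partial>M) = 0" if "W = 0 \<or> Q = 0"
  proof -
    have "AE x in M. h x = 0"
      using that
    proof
      assume "W = 0"
      then show ?thesis unfolding W_def by (intro AE_I'[of "space M"]) (auto simp: null_sets_def)
    next
      assume "Q = 0"
      then have "AE x in M. enn_powr (h x) p = 0"
        unfolding Q_def by (subst (asm) nn_integral_0_iff_AE) auto
      then show ?thesis using p by (simp add: enn_powr_eq_0_iff)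
    qed
    then show ?thesis by (simp add: nn_integral_0_iff_AE)
  qed
  have finite: "enn_powr (\<integral>\<^sup>+x. h x \<partial>M) p \<le> enn_powr W (p - 1) * Q"
    if W: "W = ennreal w" "w > 0" and Q: "Q = ennreal q" "q > 0" for w q
  proof -
    have "enn_powr (\<integral>\<^sup>+x. h x \<partial>M) p \<le> enn_powr (ennreal ((q / w) powr (1 / p) * w)) p"
      using nn_integral_le_tangent_choice[OF p _ W[unfolded W_def] Q[unfolded Q_def]] p
      by (intro enn_powr_mono) simp_all
    also have "\<dots> = ennreal (w powr (p - 1) * q)"
      using W Q p by (simp add: enn_powr_ennreal powr_mult powr_powr powr_diff)
    finally show ?thesis using W Q by (simp add: enn_powr_ennreal ennreal_mult)
  qed
  show ?thesis
  proof (cases "W = 0 \<or> Q = 0")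
    case True
    then show ?thesis using degenerate p by simp
  next
    case nonzero: False
    show ?thesis
    proof (cases "W = top \<or> Q = top")
      case True
      then have "enn_powr W (p - 1) * Q = top"
        using nonzero p by (auto simp: enn_powr_eq_0_iff ennreal_mult_eq_top_iff)
      then show ?thesis unfolding W_def Q_def by simp
    next
      case False
      then obtain w q where "W = ennreal w" "w > 0" "Q = ennreal q" "q > 0"
        using nonzero by (cases W rule: ennreal_cases; cases Q rule: ennreal_cases) auto
      then show ?thesis using finite unfolding W_def Q_def by blast
    qed
  qed
qed

lemma enn_powr_nn_integral_weighted_le:
  fixes w h :: "'b \<Rightarrow> ennreal"
  assumes p: "p > 1" and [measurable]: "w \<in> borel_measurable M" "h \<in> borel_measurable M"
  shows "enn_powr (\<integral>\<^sup>+x. w x * h x \<partial>M) p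
     \<le> enn_powr (\<integral>\<^sup>+x. w x \<partial>M) (p - 1) * (\<integral>\<^sup>+x. w x * enn_powr (h x) p \<partial>M)"
  using enn_powr_nn_integral_le[OF p, of h "density M w"]
  by (simp add: nn_integral_density emeasure_density)

section \<open>A discrete maximal inequality\<close>

lemma nn_integral_indicator_powr:
  fixes x q :: real
  assumes "x \<ge> 0" "q > 0"
  shows "(\<integral>\<^sup>+ l. ennreal (indicator {0..<x} l * l powr (q - 1)) \<partial>lborel) = ennreal (x powr q / q)"
proof -
  have hi: "((\<lambda>l. l powr (q - 1)) has_integral (x powr (q - 1 + 1) / (q - 1 + 1))) {0..x}"
    by (rule has_integral_powr_from_0) (use assms in auto)
  have "(\<integral>\<^sup>+ l. ennreal (indicator {0..x} l * l powr (q - 1)) \<partial>lborel) = ennreal (x powr q / q)"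
    using nn_integral_has_integral_lebesgue[OF _ hi] by simp
  moreover have "(\<integral>\<^sup>+ l. ennreal (indicator {0..<x} l * l powr (q - 1)) \<partial>lborel)
      = (\<integral>\<^sup>+ l. ennreal (indicator {0..x} l * l powr (q - 1)) \<partial>lborel)"
    by (rule nn_integral_cong_AE) (use AE_lborel_singleton[of x] in \<open>auto simp: indicator_def\<close>)
  ultimately show ?thesis by simp
qed

definition fwd_avg :: "(nat \<Rightarrow> real) \<Rightarrow> nat \<Rightarrow> nat \<Rightarrow> real" where
  "fwd_avg a N i = (\<Sum>m<N. a (i + m)) / real N"

lemma fwd_avg_eq_sum: "fwd_avg a N i = (\<Sum>m\<in>{i..<i+N}. a m) / real N"
proof -
  have "(\<Sum>m\<in>{i..<i+N}. a m) = (\<Sum>m<N. a (i + m))"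
    by (rule sum.reindex_bij_witness[of _ "\<lambda>m. i + m" "\<lambda>m. m - i"]) auto
  then show ?thesis unfolding fwd_avg_def by simp
qed

lemma card_Collect_le_skip: "card {i. s \<le> i \<and> i < T \<and> P i} \<le> N + card {i. s + N \<le> i \<and> i < T \<and> P i}"
proof -
  have "{i. s \<le> i \<and> i < T \<and> P i} \<subseteq> {s..<s+N} \<union> {i. s + N \<le> i \<and> i < T \<and> P i}"
    by auto
  then have "card {i. s \<le> i \<and> i < T \<and> P i} \<le> card ({s..<s+N} \<union> {i. s + N \<le> i \<and> i < T \<and> P i})"
    by (rule card_mono[rotated]) auto
  also have "\<dots> \<le> N + card {i. s + N \<le> i \<and> i < T \<and> P i}"
    using card_Un_le[of "{s..<s+N}"] by simp
  finally show ?thesis .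
qed

\<comment> \<open>Weak type (1,1): scanning from the left, every point whose forward average exceeds \<open>l\<close> starts
  a window of mass \<open>> l N\<close>; jumping past that window makes the windows disjoint.\<close>
lemma card_fwd_avg_gt_le:
  fixes a :: "nat \<Rightarrow> real"
  assumes l: "l > 0" and a: "\<And>m. a m \<ge> 0"
  shows "l * card {i. s \<le> i \<and> i < T \<and> (\<exists>N\<in>{1..L}. fwd_avg a N i > l)} \<le> (\<Sum>m\<in>{s..<T+L}. a m)"
proof (induction "T - s" arbitrary: s rule: less_induct)
  case less
  let ?P = "\<lambda>i. \<exists>N\<in>{1..L}. fwd_avg a N i > l"
  show ?case
  proof (cases "s < T")
    case False
    then have empty: "{i. s \<le> i \<and> i < T \<and> ?P i} = {}" by auto
    show ?thesis unfolding empty by (simp add: sum_nonneg a)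
  next
    case sT: True
    show ?thesis
    proof (cases "?P s")
      case False
      then have eq: "{i. s \<le> i \<and> i < T \<and> ?P i} = {i. Suc s \<le> i \<and> i < T \<and> ?P i}"
        using le_eq_less_or_eq by auto
      have "l * card {i. Suc s \<le> i \<and> i < T \<and> ?P i} \<le> (\<Sum>m\<in>{Suc s..<T+L}. a m)"
        using less sT by simp
      also have "\<dots> \<le> (\<Sum>m\<in>{s..<T+L}. a m)"
        by (rule sum_mono2) (auto simp: a)
      finally show ?thesis using eq by simp
    next
      case True
      then obtain N where N: "N \<in> {1..L}" "fwd_avg a N s > l" by blast
      have "real N > 0" using N by simp
      then have window: "l * N < (\<Sum>m\<in>{s..<s+N}. a m)"
        using N(2) by (simp add: fwd_avg_eq_sum less_divide_eq mult.commute)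
      have IH: "l * card {i. s + N \<le> i \<and> i < T \<and> ?P i} \<le> (\<Sum>m\<in>{s+N..<T+L}. a m)"
        by (rule less(1)[of "s + N"]) (use N sT in arith)
      have split: "(\<Sum>m\<in>{s..<T+L}. a m) = (\<Sum>m\<in>{s..<s+N}. a m) + (\<Sum>m\<in>{s+N..<T+L}. a m)"
        using N sT by (simp add: sum.atLeastLessThan_concat)
      have "real (card {i. s \<le> i \<and> i < T \<and> ?P i}) \<le> real N + real (card {i. s + N \<le> i \<and> i < T \<and> ?P i})"
        using card_Collect_le_skip[of s T ?P N] by (simp only: of_nat_add[symmetric] of_nat_le_iff)
      then have "l * card {i. s \<le> i \<and> i < T \<and> ?P i} \<le> l * (real N + real (card {i. s + N \<le> i \<and> i < T \<and> ?P i}))"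
        using l by (intro mult_left_mono) auto
      also have "\<dots> \<le> (\<Sum>m\<in>{s..<T+L}. a m)"
        unfolding distrib_left using window IH split by linarith
      finally show ?thesis .
    qed
  qed
qed

definition fwd_max :: "(nat \<Rightarrow> real) \<Rightarrow> nat \<Rightarrow> nat \<Rightarrow> real" where
  "fwd_max a L i = Max ((\<lambda>N. fwd_avg a N i) ` {1..L})"

lemma fwd_max_shift: "fwd_max (\<lambda>m. a (i + m)) L 0 = fwd_max a L i"
  unfolding fwd_max_def fwd_avg_def by simp

lemma fwd_max_mono: "1 \<le> L \<Longrightarrow> L \<le> L' \<Longrightarrow> fwd_max a L i \<le> fwd_max a L' i"
  unfolding fwd_max_def by (intro Max_mono) auto

lemma fwd_avg_nonneg: "(\<And>m. a m \<ge> 0) \<Longrightarrow> fwd_avg a N i \<ge> 0"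
  unfolding fwd_avg_def by (intro divide_nonneg_nonneg sum_nonneg) auto

lemma fwd_max_nonneg: assumes "L \<ge> 1" "\<And>m. a m \<ge> 0" shows "fwd_max a L i \<ge> 0"
proof -
  have "fwd_avg a 1 i \<le> fwd_max a L i" unfolding fwd_max_def using assms by (intro Max_ge) auto
  moreover have "fwd_avg a 1 i \<ge> 0" using fwd_avg_nonneg assms by blast
  ultimately show ?thesis by linarith
qed

lemma fwd_max_gtD: assumes "L \<ge> 1" "fwd_max a L i > l" shows "\<exists>N\<in>{1..L}. fwd_avg a N i > l"
proof -
  have "fwd_max a L i \<in> (\<lambda>N. fwd_avg a N i) ` {1..L}" unfolding fwd_max_def using assms(1)
    by (intro Max_in) auto
  then show ?thesis using assms(2) by auto
qed

lemma ennreal_powr_layer_cake: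
  fixes t p :: real assumes "t \<ge> 0" "p > 0"
  shows "ennreal (t powr p) = (\<integral>\<^sup>+ l. ennreal (p * (indicator {0..<t} l * l powr (p - 1))) \<partial>lborel)"
proof -
  have "(\<integral>\<^sup>+ l. ennreal (p * (indicator {0..<t} l * l powr (p - 1))) \<partial>lborel)
      = ennreal p * (\<integral>\<^sup>+ l. ennreal (indicator {0..<t} l * l powr (p - 1)) \<partial>lborel)"
    using assms by (simp add: ennreal_mult nn_integral_cmult)
  also have "\<dots> = ennreal p * ennreal (t powr p / p)" using nn_integral_indicator_powr assms by simp
  also have "\<dots> = ennreal (t powr p)" using assms by (simp add: ennreal_mult[symmetric])
  finally show ?thesis by simp
qed

\<comment> \<open>Weak type (1,1) for \<open>fwd_max\<close>, applied to the part of \<open>a\<close> above \<open>l/2\<close>: the rest has averages \<open>\<le> l/2\<close>.\<close>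
lemma card_fwd_max_gt_le:
  fixes a :: "nat \<Rightarrow> real"
  assumes L: "L \<ge> 1" and a: "\<And>m. a m \<ge> 0" and l: "l > 0"
  shows "l / 2 * card {i. i < T \<and> l < fwd_max a L i} \<le> (\<Sum>m<T+L. if a m > l / 2 then a m else 0)"
proof -
  define b where "b m = (if a m > l / 2 then a m else 0)" for m
  have b0: "b m \<ge> 0" for m using a by (simp add: b_def)
  have sub: "{i. i < T \<and> l < fwd_max a L i} \<subseteq> {i. i < T \<and> (\<exists>N\<in>{1..L}. fwd_avg b N i > l / 2)}"
  proof safe
    fix i assume "i < T" "l < fwd_max a L i"
    then obtain N where N: "N \<in> {1..L}" "fwd_avg a N i > l" using fwd_max_gtD[OF L] by blast
    have "(\<Sum>m<N. a (i + m)) \<le> (\<Sum>m<N. b (i + m) + l / 2)"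
      using l by (intro sum_mono) (auto simp: b_def)
    also have "\<dots> = (\<Sum>m<N. b (i + m)) + N * (l / 2)" by (simp add: sum.distrib)
    finally have "fwd_avg a N i \<le> fwd_avg b N i + l / 2"
      using N unfolding fwd_avg_def by (simp add: field_simps)
    then show "\<exists>N\<in>{1..L}. fwd_avg b N i > l / 2" using N by (intro bexI[of _ N]) auto
  qed
  have "card {i. i < T \<and> l < fwd_max a L i} \<le> card {i. i < T \<and> (\<exists>N\<in>{1..L}. fwd_avg b N i > l / 2)}"
    by (rule card_mono[OF _ sub]) auto
  then have "l / 2 * card {i. i < T \<and> l < fwd_max a L i}
      \<le> l / 2 * card {i. i < T \<and> (\<exists>N\<in>{1..L}. fwd_avg b N i > l / 2)}"
    using l by (intro mult_left_mono) auto
  also have "\<dots> \<le> (\<Sum>m<T+L. b m)"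
    using card_fwd_avg_gt_le[of "l / 2" b 0 T L] l b0 by (simp add: atLeast0LessThan)
  finally show ?thesis unfolding b_def .
qed

lemma fwd_max_layer_cake_bound:
  fixes a :: "nat \<Rightarrow> real"
  assumes p: "p > 1" and L: "L \<ge> 1" and a: "\<And>m. a m \<ge> 0"
  shows "(\<Sum>i<T. p * (indicator {0..<fwd_max a L i} l * l powr (p - 1)))
     \<le> (\<Sum>m<T+L. 2 * p * a m * (indicator {0..<2 * a m} l * l powr (p - 2)))"
proof (cases "l > 0")
  case False
  then have "l powr (p - 1) = 0 \<or> l < 0" by auto
  then have "(\<Sum>i<T. p * (indicator {0..<fwd_max a L i} l * l powr (p - 1))) = 0"
    by (auto simp: indicator_def)
  moreover have "(\<Sum>m<T+L. 2 * p * a m * (indicator {0..<2 * a m} l * l powr (p - 2))) \<ge> 0"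
    using p a by (intro sum_nonneg) (auto simp: indicator_def)
  ultimately show ?thesis by simp
next
  case l: True
  have seteq: "{i\<in>{..<T}. l < fwd_max a L i} = {i. i < T \<and> l < fwd_max a L i}" by auto
  have "(\<Sum>i<T. p * (indicator {0..<fwd_max a L i} l * l powr (p - 1)))
      = (\<Sum>i<T. if l < fwd_max a L i then p * l powr (p - 1) else 0)"
    using l by (intro sum.cong) (auto simp: indicator_def)
  also have "\<dots> = (\<Sum>i\<in>{i. i < T \<and> l < fwd_max a L i}. p * l powr (p - 1))"
    unfolding seteq[symmetric] by (rule sum.inter_filter[symmetric]) simp
  also have "\<dots> = 2 * p * l powr (p - 2) * (l / 2 * card {i. i < T \<and> l < fwd_max a L i})"
  proof -
    have "l powr (p - 1) = l powr (p - 2) * l"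
      using l powr_add[of l "p - 2" 1] by simp
    then show ?thesis by simp
  qed
  also have "\<dots> \<le> 2 * p * l powr (p - 2) * (\<Sum>m<T+L. if a m > l / 2 then a m else 0)"
    using card_fwd_max_gt_le[OF L a l] p l by (intro mult_left_mono) auto
  also have "\<dots> = (\<Sum>m<T+L. 2 * p * a m * (indicator {0..<2 * a m} l * l powr (p - 2)))"
    using l by (auto simp: sum_distrib_left indicator_def intro!: sum.cong)
  finally show ?thesis .
qed

lemma nn_integral_layer_cake_weak_type:
  assumes a: "a \<ge> 0" and p: "p > 1"
  shows "(\<integral>\<^sup>+ l. ennreal (2 * p * a * (indicator {0..<2 * a} l * l powr (p - 2))) \<partial>lborel)
    = ennreal (2 powr p * p / (p - 1)) * ennreal (a powr p)"
proof -
  have "(\<integral>\<^sup>+ l. ennreal (2 * p * a * (indicator {0..<2 * a} l * l powr (p - 2))) \<partial>lborel)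
      = ennreal (2 * p * a) * (\<integral>\<^sup>+ l. ennreal (indicator {0..<2 * a} l * l powr (p - 1 - 1)) \<partial>lborel)"
    using assms by (simp add: ennreal_mult nn_integral_cmult)
  also have "(\<integral>\<^sup>+ l. ennreal (indicator {0..<2 * a} l * l powr (p - 1 - 1)) \<partial>lborel)
      = ennreal ((2 * a) powr (p - 1) / (p - 1))"
    by (rule nn_integral_indicator_powr) (use assms in auto)
  also have "ennreal (2 * p * a) * ennreal ((2 * a) powr (p - 1) / (p - 1))
      = ennreal (2 * p * a * ((2 * a) powr (p - 1) / (p - 1)))"
    by (rule ennreal_mult[symmetric]) (use assms in auto)
  also have "2 * p * a * ((2 * a) powr (p - 1) / (p - 1)) = 2 powr p * p / (p - 1) * a powr p"
  proof (cases "a = 0")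
    case False
    with a have "a > 0" by simp
    moreover have "(2 * a) powr (p - 1) = 2 powr p / 2 * (a powr p / a)"
      using \<open>a > 0\<close> by (simp add: powr_mult powr_diff)
    ultimately show ?thesis using p by (simp add: field_simps)
  qed simp
  also have "ennreal (2 powr p * p / (p - 1) * a powr p) = ennreal (2 powr p * p / (p - 1)) * ennreal (a powr p)"
    by (rule ennreal_mult) (use p in auto)
  finally show ?thesis .
qed

lemma sum_fwd_max_powr_le:
  fixes a :: "nat \<Rightarrow> real"
  assumes p: "p > 1" and L: "L \<ge> 1" and a: "\<And>m. a m \<ge> 0"
  shows "(\<Sum>i<T. ennreal (fwd_max a L i powr p))
     \<le> ennreal (2 powr p * p / (p - 1)) * (\<Sum>m<T+L. ennreal (a m powr p))"
proof -
  have "(\<Sum>i<T. ennreal (fwd_max a L i powr p))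
      = (\<Sum>i<T. \<integral>\<^sup>+ l. ennreal (p * (indicator {0..<fwd_max a L i} l * l powr (p - 1))) \<partial>lborel)"
    using fwd_max_nonneg[OF L a] p by (simp add: ennreal_powr_layer_cake)
  also have "\<dots> = (\<integral>\<^sup>+ l. ennreal (\<Sum>i<T. p * (indicator {0..<fwd_max a L i} l * l powr (p - 1))) \<partial>lborel)"
    using p by (subst nn_integral_sum[symmetric]) (auto intro!: nn_integral_cong sum_ennreal)
  also have "\<dots> \<le> (\<integral>\<^sup>+ l. ennreal (\<Sum>m<T+L. 2 * p * a m * (indicator {0..<2 * a m} l * l powr (p - 2))) \<partial>lborel)"
    by (intro nn_integral_mono ennreal_leI fwd_max_layer_cake_bound p L a)
  also have "\<dots> = (\<Sum>m<T+L. \<integral>\<^sup>+ l. ennreal (2 * p * a m * (indicator {0..<2 * a m} l * l powr (p - 2))) \<partial>lborel)"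
    using p a by (subst nn_integral_sum[symmetric]) (auto intro!: nn_integral_cong sum_ennreal[symmetric])
  also have "\<dots> = ennreal (2 powr p * p / (p - 1)) * (\<Sum>m<T+L. ennreal (a m powr p))"
    using p a by (simp only: nn_integral_layer_cake_weak_type sum_distrib_left)
  finally show ?thesis .
qed

section \<open>Directional maximal functions\<close>

lemma nn_integral_lborel_affine:
  fixes t :: "'a::euclidean_space" and c :: real
  assumes [measurable]: "f \<in> borel_measurable borel" and c: "c \<noteq> 0"
  shows "(\<integral>\<^sup>+x. f x \<partial>lborel) = ennreal (\<bar>c\<bar> ^ DIM('a)) * (\<integral>\<^sup>+x. f (t + c *\<^sub>R x) \<partial>lborel)"
  by (subst lborel_affine[OF c, of t]) (simp add: nn_integral_density nn_integral_distr nn_integral_cmult)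

lemma nn_integral_lborel_translate:
  fixes c :: "'a::euclidean_space"
  assumes [measurable]: "f \<in> borel_measurable borel"
  shows "(\<integral>\<^sup>+y. f (c + y) \<partial>lborel) = (\<integral>\<^sup>+y. f y \<partial>lborel)"
  using nn_integral_lborel_affine[of f 1 c] by simp

lemma nn_integral_lborel_reflect:
  fixes x :: "'a::euclidean_space"
  assumes [measurable]: "f \<in> borel_measurable borel"
  shows "(\<integral>\<^sup>+y. f (x - y) \<partial>lborel) = (\<integral>\<^sup>+y. f y \<partial>lborel)"
  using nn_integral_lborel_affine[of f "-1" x] by simp

definition lattice_max :: "('a::euclidean_space \<Rightarrow> real) \<Rightarrow> 'a \<Rightarrow> nat \<Rightarrow> 'a \<Rightarrow> real" where
  "lattice_max G w L y = fwd_max (\<lambda>m. G (y - real m *\<^sub>R w)) L 0"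

lemma lattice_max_measurable[measurable]:
  assumes [measurable]: "G \<in> borel_measurable borel"
  shows "lattice_max G w L \<in> borel_measurable borel"
  unfolding lattice_max_def fwd_max_def fwd_avg_def by measurable

lemma ennreal_le_of_averaged_bound:
  fixes I C Q :: ennreal
  assumes "\<And>T::nat. T \<ge> 1 \<Longrightarrow> of_nat T * I \<le> C * (of_nat (T + L) * Q)"
  shows "I \<le> C * Q"
proof (rule ennreal_le_epsilon)
  fix e :: real assume "C * Q < top" "0 < e"
  then obtain r where r: "C * Q = ennreal r" "r \<ge> 0" by (cases "C * Q" rule: ennreal_cases) auto
  obtain T :: nat where T: "T \<ge> 1" "r * L / e < T"
    by (metis reals_Archimedean2 max.cobounded1 max.cobounded2 of_nat_le_iff order.strict_trans2)
  then have "r * real L \<le> real T * e"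
    using \<open>0 < e\<close> by (simp add: pos_divide_less_eq mult.commute)
  have "of_nat T * I \<le> C * Q * of_nat (T + L)"
    using assms[OF T(1)] by (simp only: mult_ac)
  also have "\<dots> = ennreal (real T * r + r * real L)"
    using r by (simp add: ennreal_of_nat_eq_real_of_nat ennreal_mult[symmetric] algebra_simps)
  also have "\<dots> \<le> ennreal (real T * (r + e))"
    using \<open>r * real L \<le> real T * e\<close> by (intro ennreal_leI) (simp add: algebra_simps)
  also have "\<dots> = of_nat T * (C * Q + ennreal e)"
    using r \<open>0 < e\<close> by (simp add: ennreal_of_nat_eq_real_of_nat ennreal_mult ennreal_plus)
  finally show "I \<le> C * Q + ennreal e"
    using T(1) by (subst (asm) ennreal_mult_le_mult_iff) auto
qed

lemma lattice_max_translate: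
  "lattice_max G w L (y - real i *\<^sub>R w) = fwd_max (\<lambda>m. G (y - real m *\<^sub>R w)) L i"
proof -
  have "lattice_max G w L (y - real i *\<^sub>R w) = fwd_max (\<lambda>m. G (y - real (i + m) *\<^sub>R w)) L 0"
    unfolding lattice_max_def by (simp add: algebra_simps)
  also have "\<dots> = fwd_max (\<lambda>m. G (y - real m *\<^sub>R w)) L i" by (rule fwd_max_shift)
  finally show ?thesis .
qed

\<comment> \<open>Transference: summing the discrete inequality along the translates \<open>y - i w\<close>, \<open>i < T\<close>, gives
  \<open>T \<cdot> I \<le> C (T + L) Q\<close>; then let \<open>T \<rightarrow> \<infinity>\<close>.\<close>
lemma lattice_max_Lp_bound:
  fixes G :: "'a::euclidean_space \<Rightarrow> real"
  assumes p: "p > 1" and L: "L \<ge> 1" and G[measurable]: "G \<in> borel_measurable borel"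
    and G0: "\<And>y. G y \<ge> 0"
  shows "(\<integral>\<^sup>+ y. ennreal (lattice_max G w L y powr p) \<partial>lborel)
      \<le> ennreal (2 powr p * p / (p - 1)) * (\<integral>\<^sup>+ y. ennreal (G y powr p) \<partial>lborel)"
proof (rule ennreal_le_of_averaged_bound)
  fix T :: nat assume T: "T \<ge> 1"
  define I where "I = (\<integral>\<^sup>+ y. ennreal (lattice_max G w L y powr p) \<partial>lborel)"
  define Q where "Q = (\<integral>\<^sup>+ y. ennreal (G y powr p) \<partial>lborel)"
  define C where "C = ennreal (2 powr p * p / (p - 1))"
  have tr1: "(\<integral>\<^sup>+ y. ennreal (lattice_max G w L (y - real i *\<^sub>R w) powr p) \<partial>lborel) = I" for i
    unfolding I_def using nn_integral_lborel_translate[of "\<lambda>y. ennreal (lattice_max G w L y powr p)" "- (real i *\<^sub>R w)"]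
    by simp
  have tr2: "(\<integral>\<^sup>+ y. ennreal (G (y - real m *\<^sub>R w) powr p) \<partial>lborel) = Q" for m
    unfolding Q_def using nn_integral_lborel_translate[of "\<lambda>y. ennreal (G y powr p)" "- (real m *\<^sub>R w)"]
    by simp
  have "of_nat T * I = (\<Sum>i<T. \<integral>\<^sup>+ y. ennreal (lattice_max G w L (y - real i *\<^sub>R w) powr p) \<partial>lborel)"
    by (simp add: tr1)
  also have "\<dots> = (\<integral>\<^sup>+ y. (\<Sum>i<T. ennreal (lattice_max G w L (y - real i *\<^sub>R w) powr p)) \<partial>lborel)"
    by (rule nn_integral_sum[symmetric]) simp
  also have "\<dots> \<le> (\<integral>\<^sup>+ y. C * (\<Sum>m<T+L. ennreal (G (y - real m *\<^sub>R w) powr p)) \<partial>lborel)"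
  proof (rule nn_integral_mono)
    fix y
    show "(\<Sum>i<T. ennreal (lattice_max G w L (y - real i *\<^sub>R w) powr p)) \<le> C * (\<Sum>m<T+L. ennreal (G (y - real m *\<^sub>R w) powr p))"
      unfolding lattice_max_translate C_def by (rule sum_fwd_max_powr_le[OF p L G0])
  qed
  also have "\<dots> = C * (\<Sum>m<T+L. \<integral>\<^sup>+ y. ennreal (G (y - real m *\<^sub>R w) powr p) \<partial>lborel)"
    unfolding C_def by (subst nn_integral_cmult) (simp, subst nn_integral_sum, auto simp del: sum_ennreal)
  also have "\<dots> = C * (of_nat (T + L) * Q)" by (simp add: tr2)
  finally show "of_nat T * I \<le> C * (of_nat (T + L) * Q)" .
qed

definition lattice_sup :: "('a::euclidean_space \<Rightarrow> real) \<Rightarrow> 'a \<Rightarrow> 'a \<Rightarrow> ennreal" where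
  "lattice_sup G w y = (SUP L. ennreal (lattice_max G w (Suc L) y))"

lemma lattice_sup_measurable [measurable]:
  assumes [measurable]: "G \<in> borel_measurable borel"
  shows "lattice_sup G w \<in> borel_measurable borel"
  unfolding lattice_sup_def by measurable

lemma lattice_sup_Lp_bound:
  fixes G :: "'a::euclidean_space \<Rightarrow> real"
  assumes p: "p > 1" and G[measurable]: "G \<in> borel_measurable borel" and G0: "\<And>y. G y \<ge> 0"
  shows "(\<integral>\<^sup>+ y. enn_powr (lattice_sup G w y) p \<partial>lborel)
      \<le> ennreal (2 powr p * p / (p - 1)) * (\<integral>\<^sup>+ y. ennreal (G y powr p) \<partial>lborel)"
proof -
  have p0: "p > 0" using p by simp
  have nn: "lattice_max G w (Suc L) y \<ge> 0" for L y
    unfolding lattice_max_def by (rule fwd_max_nonneg) (auto simp: G0)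
  have "(\<integral>\<^sup>+ y. enn_powr (lattice_sup G w y) p \<partial>lborel)
     = (\<integral>\<^sup>+ y. (SUP L. ennreal (lattice_max G w (Suc L) y powr p)) \<partial>lborel)"
    unfolding lattice_sup_def by (simp add: enn_powr_Sup[OF p0] image_comp enn_powr_ennreal nn)
  also have "\<dots> = (SUP L. \<integral>\<^sup>+ y. ennreal (lattice_max G w (Suc L) y powr p) \<partial>lborel)"
  proof (rule nn_integral_monotone_convergence_SUP)
    show "incseq (\<lambda>L y. ennreal (lattice_max G w (Suc L) y powr p))"
      unfolding lattice_max_def
      by (auto simp: incseq_def le_fun_def intro!: ennreal_leI powr_mono2 fwd_max_mono
          nn[unfolded lattice_max_def] p0[THEN less_imp_le])
  qed simp
  also have "\<dots> \<le> ennreal (2 powr p * p / (p - 1)) * (\<integral>\<^sup>+ y. ennreal (G y powr p) \<partial>lborel)"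
    by (rule SUP_least) (rule lattice_max_Lp_bound[OF p _ G G0], simp)
  finally show ?thesis .
qed

lemma sum_le_lattice_sup:
  assumes K: "K \<ge> 1" and G0: "\<And>y. G y \<ge> 0"
  shows "(\<Sum>m<K. ennreal (G (y - real m *\<^sub>R w))) \<le> of_nat K * lattice_sup G w y"
proof -
  have "(\<Sum>m<K. ennreal (G (y - real m *\<^sub>R w))) = ennreal (real K * fwd_avg (\<lambda>m. G (y - real m *\<^sub>R w)) K 0)"
    using K G0 unfolding fwd_avg_def by simp
  also have "\<dots> \<le> ennreal (real K * lattice_max G w K y)"
    unfolding lattice_max_def fwd_max_def using K by (intro ennreal_leI mult_left_mono Max_ge) auto
  also have "\<dots> = of_nat K * ennreal (lattice_max G w K y)"
    using fwd_max_nonneg[OF K, of "\<lambda>m. G (y - real m *\<^sub>R w)" 0] G0 unfolding lattice_max_def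
    by (simp add: ennreal_mult ennreal_of_nat_eq_real_of_nat)
  also have "ennreal (lattice_max G w K y) \<le> lattice_sup G w y"
    unfolding lattice_sup_def using K by (intro SUP_upper2[of "K - 1"]) auto
  finally show ?thesis by (simp add: mult_left_mono)
qed

definition seg_avg :: "('a::euclidean_space \<Rightarrow> real) \<Rightarrow> 'a \<Rightarrow> 'a \<Rightarrow> ennreal" where
  "seg_avg G v x = (\<integral>\<^sup>+ t. ennreal (G (x - t *\<^sub>R v)) * indicator {1..2} t \<partial>lborel)"

lemma seg_avg_measurable [measurable]:
  assumes [measurable]: "G \<in> borel_measurable borel"
  shows "seg_avg G v \<in> borel_measurable borel"
  unfolding seg_avg_def by measurable

lemma seg_avg_rescale:
  fixes G :: "'a::euclidean_space \<Rightarrow> real"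
  assumes c: "c > 0" and [measurable]: "G \<in> borel_measurable borel"
  shows "(\<integral>\<^sup>+ s. ennreal (G (x - s *\<^sub>R w)) * indicator {c..2*c} s \<partial>lborel)
    = ennreal c * seg_avg G (c *\<^sub>R w) x"
proof -
  have "(\<integral>\<^sup>+ s. ennreal (G (x - s *\<^sub>R w)) * indicator {c..2*c} s \<partial>lborel)
    = ennreal c * (\<integral>\<^sup>+ t. ennreal (G (x - (c * t) *\<^sub>R w)) * indicator {c..2*c} (c * t) \<partial>lborel)"
    using nn_integral_real_affine[of "\<lambda>s. ennreal (G (x - s *\<^sub>R w)) * indicator {c..2*c} s" c 0] c
    by simp
  also have "(\<lambda>t. ennreal (G (x - (c * t) *\<^sub>R w)) * indicator {c..2*c} (c * t))
      = (\<lambda>t. ennreal (G (x - t *\<^sub>R (c *\<^sub>R w))) * indicator {1..2} t)"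
  proof
    fix t
    have "c * t \<in> {c..2*c} \<longleftrightarrow> t \<in> {1..2}" using c by auto
    then show "ennreal (G (x - (c * t) *\<^sub>R w)) * indicator {c..2*c} (c * t)
      = ennreal (G (x - t *\<^sub>R (c *\<^sub>R w))) * indicator {1..2} t"
      by (simp add: indicator_def mult.commute)
  qed
  finally show ?thesis unfolding seg_avg_def .
qed

lemma ex_unit_interval_cover:
  fixes s :: real and K :: nat
  assumes "0 \<le> s" "s \<le> real K" "K \<ge> 1"
  shows "\<exists>m<K. s \<in> {real m..real m + 1}"
proof -
  define m where "m = min (nat \<lfloor>s\<rfloor>) (K - 1)"
  have "m < K" using assms unfolding m_def by simp
  moreover have "s \<in> {real m..real m + 1}"
  proof (cases "nat \<lfloor>s\<rfloor> \<le> K - 1")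
    case True
    then have "m = nat \<lfloor>s\<rfloor>" unfolding m_def by simp
    then show ?thesis using assms by (simp add: of_nat_nat)
  next
    case False
    then have m: "m = K - 1" unfolding m_def by simp
    have "real (nat \<lfloor>s\<rfloor>) \<le> s" using assms by (simp add: of_nat_nat)
    then have "real m \<le> s" using False m by linarith
    moreover have "real m + 1 = real K" using m assms by simp
    ultimately show ?thesis using assms by simp
  qed
  ultimately show ?thesis by blast
qed

lemma nn_integral_le_sum_unit_intervals:
  fixes F :: "real \<Rightarrow> ennreal"
  assumes [measurable]: "F \<in> borel_measurable borel" and K: "K \<ge> 1"
  shows "(\<integral>\<^sup>+ s. F s * indicator {0..real K} s \<partial>lborel)
    \<le> (\<Sum>m<K. \<integral>\<^sup>+ u. F (real m + u) * indicator {0..1} u \<partial>lborel)"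
proof -
  have "F s * indicator {0..real K} s \<le> (\<Sum>m<K. F s * indicator {real m..real m + 1} s)" for s
  proof (cases "s \<in> {0..real K}")
    case True
    then obtain m where m: "m < K" "s \<in> {real m..real m + 1}"
      using ex_unit_interval_cover[of s K] K by auto
    then have "F s * indicator {0..real K} s = F s * indicator {real m..real m + 1} s"
      using True by simp
    also have "\<dots> \<le> (\<Sum>m<K. F s * indicator {real m..real m + 1} s)"
      by (rule member_le_sum) (use m in auto)
    finally show ?thesis .
  qed simp
  then have "(\<integral>\<^sup>+ s. F s * indicator {0..real K} s \<partial>lborel)
      \<le> (\<Sum>m<K. \<integral>\<^sup>+ s. F s * indicator {real m..real m + 1} s \<partial>lborel)"
    by (subst nn_integral_sum[symmetric]) (auto intro: nn_integral_mono)
  also have "\<dots> = (\<Sum>m<K. \<integral>\<^sup>+ u. F (real m + u) * indicator {0..1} u \<partial>lborel)"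
  proof (intro sum.cong refl)
    fix m
    have "(\<integral>\<^sup>+ s. F s * indicator {real m..real m + 1} s \<partial>lborel)
      = (\<integral>\<^sup>+ u. F (real m + u) * indicator {real m..real m + 1} (real m + u) \<partial>lborel)"
      by (rule nn_integral_lborel_translate[symmetric]) measurable
    also have "\<dots> = (\<integral>\<^sup>+ u. F (real m + u) * indicator {0..1} u \<partial>lborel)"
      by (intro nn_integral_cong) (simp add: indicator_def)
    finally show "(\<integral>\<^sup>+ s. F s * indicator {real m..real m + 1} s \<partial>lborel)
      = (\<integral>\<^sup>+ u. F (real m + u) * indicator {0..1} u \<partial>lborel)" .
  qed
  finally show ?thesis .
qed

\<comment> \<open>A continuous average over \<open>[2^j, 2^(j+1)]\<close> along \<open>w\<close> splits into unit pieces, each of which is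
  a discrete forward average along the lattice \<open>x - u w - \<nat> w\<close>, \<open>0 \<le> u \<le> 1\<close>.\<close>
lemma seg_avg_dyadic_le:
  fixes G :: "'a::euclidean_space \<Rightarrow> real"
  assumes G[measurable]: "G \<in> borel_measurable borel" and G0: "\<And>y. G y \<ge> 0"
  shows "seg_avg G ((2::real)^j *\<^sub>R w) x
    \<le> 2 * (\<integral>\<^sup>+u. indicator {0..1} u * lattice_sup G w (x - u *\<^sub>R w) \<partial>lborel)"
proof -
  define c :: real where "c = 2^j"
  define K :: nat where "K = 2^(j+1)"
  have c: "c > 0" "of_nat K = ennreal c * 2" and K: "K \<ge> 1"
    by (simp_all add: c_def K_def ennreal_of_nat_eq_real_of_nat ennreal_mult mult.commute)
  have "ennreal c * seg_avg G (c *\<^sub>R w) x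
      = (\<integral>\<^sup>+ s. ennreal (G (x - s *\<^sub>R w)) * indicator {c..2*c} s \<partial>lborel)"
    by (rule seg_avg_rescale[symmetric, OF c(1) G])
  also have "\<dots> \<le> (\<integral>\<^sup>+ s. ennreal (G (x - s *\<^sub>R w)) * indicator {0..real K} s \<partial>lborel)"
    using c by (intro nn_integral_mono mult_left_mono) (auto simp: K_def c_def indicator_def)
  also have "\<dots> \<le> (\<Sum>m<K. \<integral>\<^sup>+ u. ennreal (G (x - (real m + u) *\<^sub>R w)) * indicator {0..1} u \<partial>lborel)"
    by (rule nn_integral_le_sum_unit_intervals[OF _ K]) measurable
  also have "\<dots> = (\<integral>\<^sup>+ u. indicator {0..1} u * (\<Sum>m<K. ennreal (G ((x - u *\<^sub>R w) - real m *\<^sub>R w))) \<partial>lborel)"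
    by (subst nn_integral_sum[symmetric])
       (auto simp: sum_distrib_left mult.commute algebra_simps intro!: nn_integral_cong)
  also have "\<dots> \<le> (\<integral>\<^sup>+ u. indicator {0..1} u * (of_nat K * lattice_sup G w (x - u *\<^sub>R w)) \<partial>lborel)"
    by (intro nn_integral_mono mult_left_mono sum_le_lattice_sup K G0) simp
  also have "\<dots> = of_nat K * (\<integral>\<^sup>+u. indicator {0..1} u * lattice_sup G w (x - u *\<^sub>R w) \<partial>lborel)"
    by (subst nn_integral_cmult[symmetric]) (measurable, simp add: mult_ac)
  also have "\<dots> = ennreal c * (2 * (\<integral>\<^sup>+u. indicator {0..1} u * lattice_sup G w (x - u *\<^sub>R w) \<partial>lborel))"
    unfolding c(2) by (simp add: mult_ac)
  finally show ?thesis using c unfolding c_def by (simp add: ennreal_mult_le_mult_iff)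
qed

lemma nn_integral_avg_translates:
  fixes F :: "'a::euclidean_space \<Rightarrow> ennreal"
  assumes [measurable]: "F \<in> borel_measurable borel"
  shows "(\<integral>\<^sup>+x. (\<integral>\<^sup>+u. indicator {0..1} u * F (x - u *\<^sub>R w) \<partial>lborel) \<partial>lborel) = (\<integral>\<^sup>+x. F x \<partial>lborel)"
proof -
  have "(\<integral>\<^sup>+x. (\<integral>\<^sup>+u. indicator {0..1} u * F (x - u *\<^sub>R w) \<partial>lborel) \<partial>lborel)
      = (\<integral>\<^sup>+u. (\<integral>\<^sup>+x. indicator {0..1} u * F (x - u *\<^sub>R w) \<partial>lborel) \<partial>lborel)"
    by (rule lborel_pair.Fubini'[symmetric]) measurable
  also have "\<dots> = (\<integral>\<^sup>+u. indicator {0..1::real} u * (\<integral>\<^sup>+x. F x \<partial>lborel) \<partial>lborel)"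
  proof (rule nn_integral_cong)
    fix u :: real
    have "(\<integral>\<^sup>+x. F (x - u *\<^sub>R w) \<partial>lborel) = (\<integral>\<^sup>+x. F x \<partial>lborel)"
      using nn_integral_lborel_translate[of F "- (u *\<^sub>R w)"] by simp
    then show "(\<integral>\<^sup>+x. indicator {0..1} u * F (x - u *\<^sub>R w) \<partial>lborel)
      = indicator {0..1} u * (\<integral>\<^sup>+x. F x \<partial>lborel)"
      by (subst nn_integral_cmult) auto
  qed
  also have "\<dots> = (\<integral>\<^sup>+x. F x \<partial>lborel)" by (simp add: nn_integral_multc)
  finally show ?thesis .
qed

lemma enn_powr_dyadic_seg_max_le:
  fixes G :: "'a::euclidean_space \<Rightarrow> real"
  assumes p: "p > 1" and G[measurable]: "G \<in> borel_measurable borel" and G0: "\<And>y. G y \<ge> 0"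
  shows "enn_powr (SUP j::nat. seg_avg G ((2::real)^j *\<^sub>R w) x) p
    \<le> ennreal (2 powr p) * (\<integral>\<^sup>+u. indicator {0..1} u * enn_powr (lattice_sup G w (x - u *\<^sub>R w)) p \<partial>lborel)"
proof -
  have p0: "p > 0" using p by simp
  define J where "J = (\<integral>\<^sup>+u. indicator {0..1} u * lattice_sup G w (x - u *\<^sub>R w) \<partial>lborel)"
  have "(SUP j::nat. seg_avg G ((2::real)^j *\<^sub>R w) x) \<le> 2 * J"
    unfolding J_def by (rule SUP_least) (rule seg_avg_dyadic_le[OF G G0])
  then have "enn_powr (SUP j::nat. seg_avg G ((2::real)^j *\<^sub>R w) x) p \<le> enn_powr (2 * J) p"
    by (rule enn_powr_mono[OF p0])
  also have "\<dots> = ennreal (2 powr p) * enn_powr J p"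
    using enn_powr_mult[OF p0, of 2 J] enn_powr_ennreal[of 2 p] by simp
  also have "\<dots> \<le> ennreal (2 powr p) * (\<integral>\<^sup>+u. indicator {0..1} u * enn_powr (lattice_sup G w (x - u *\<^sub>R w)) p \<partial>lborel)"
  proof (intro mult_left_mono)
    have "(\<lambda>u. lattice_sup G w (x - u *\<^sub>R w)) \<in> borel_measurable lborel" by measurable
    from enn_powr_nn_integral_weighted_le[OF p _ this, of "indicator {0..1}"]
    show "enn_powr J p \<le> (\<integral>\<^sup>+u. indicator {0..1} u * enn_powr (lattice_sup G w (x - u *\<^sub>R w)) p \<partial>lborel)"
      unfolding J_def by simp
  qed simp
  finally show ?thesis .
qed

lemma dyadic_seg_max_Lp_bound:
  fixes G :: "'a::euclidean_space \<Rightarrow> real"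
  assumes p: "p > 1" and G[measurable]: "G \<in> borel_measurable borel" and G0: "\<And>y. G y \<ge> 0"
  shows "(\<integral>\<^sup>+ x. enn_powr (SUP j::nat. seg_avg G ((2::real)^j *\<^sub>R w) x) p \<partial>lborel)
      \<le> ennreal (4 powr p * p / (p - 1)) * (\<integral>\<^sup>+ y. ennreal (G y powr p) \<partial>lborel)"
proof -
  define D where "D = (\<integral>\<^sup>+ y. enn_powr (lattice_sup G w y) p \<partial>lborel)"
  have "(\<integral>\<^sup>+ x. enn_powr (SUP j::nat. seg_avg G ((2::real)^j *\<^sub>R w) x) p \<partial>lborel)
     \<le> (\<integral>\<^sup>+ x. ennreal (2 powr p) * (\<integral>\<^sup>+u. indicator {0..1} u * enn_powr (lattice_sup G w (x - u *\<^sub>R w)) p \<partial>lborel) \<partial>lborel)"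
    by (intro nn_integral_mono enn_powr_dyadic_seg_max_le p G G0)
  also have "\<dots> = ennreal (2 powr p) * (\<integral>\<^sup>+ x. (\<integral>\<^sup>+u. indicator {0..1} u * enn_powr (lattice_sup G w (x - u *\<^sub>R w)) p \<partial>lborel) \<partial>lborel)"
    by (rule nn_integral_cmult) measurable
  also have "(\<integral>\<^sup>+ x. (\<integral>\<^sup>+u. indicator {0..1} u * enn_powr (lattice_sup G w (x - u *\<^sub>R w)) p \<partial>lborel) \<partial>lborel) = D"
    unfolding D_def by (rule nn_integral_avg_translates) measurable
  finally have "(\<integral>\<^sup>+ x. enn_powr (SUP j::nat. seg_avg G ((2::real)^j *\<^sub>R w) x) p \<partial>lborel) \<le> ennreal (2 powr p) * D" .
  also have "\<dots> \<le> ennreal (2 powr p) * (ennreal (2 powr p * p / (p - 1)) * (\<integral>\<^sup>+ y. ennreal (G y powr p) \<partial>lborel))"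
    unfolding D_def by (intro mult_left_mono lattice_sup_Lp_bound[OF p G G0]) simp
  also have "\<dots> = ennreal (4 powr p * p / (p - 1)) * (\<integral>\<^sup>+ y. ennreal (G y powr p) \<partial>lborel)"
  proof -
    have "4 powr p * p / (p - 1) = 2 powr p * (2 powr p * p / (p - 1))"
      using powr_mult[of 2 2 p] by simp
    then have "ennreal (4 powr p * p / (p - 1)) = ennreal (2 powr p) * ennreal (2 powr p * p / (p - 1))"
      using p by (simp only:) (rule ennreal_mult, simp_all)
    then show ?thesis by (simp only: mult.assoc)
  qed
  finally show ?thesis .
qed

lemma SUP_int_eq_SUP_shift:
  fixes f :: "int \<Rightarrow> 'b::complete_lattice"
  shows "(SUP k. f k) = (SUP K::nat. SUP j::nat. f (int j - int K))"
proof (rule antisym)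
  show "(SUP k. f k) \<le> (SUP K::nat. SUP j::nat. f (int j - int K))"
  proof (rule SUP_least)
    fix k :: int
    have "f k = f (int (nat (k + int (nat (- k)))) - int (nat (- k)))" by simp
    also have "\<dots> \<le> (SUP K::nat. SUP j::nat. f (int j - int K))"
      by (intro SUP_upper2[of "nat (- k)"] SUP_upper) simp_all
    finally show "f k \<le> (SUP K::nat. SUP j::nat. f (int j - int K))" .
  qed
qed (intro SUP_least SUP_upper, simp)

lemma incseq_SUP_shift:
  fixes f :: "int \<Rightarrow> 'b::complete_lattice"
  shows "incseq (\<lambda>K::nat. SUP j::nat. f (int j - int K))"
proof (rule incseq_SucI, rule SUP_least)
  fix K j :: nat
  have "f (int j - int K) = f (int (Suc j) - int (Suc K))" by simp
  then show "f (int j - int K) \<le> (SUP j::nat. f (int j - int (Suc K)))"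
    by (metis SUP_upper UNIV_I)
qed

definition dir_max :: "('a::euclidean_space \<Rightarrow> real) \<Rightarrow> 'a \<Rightarrow> 'a \<Rightarrow> ennreal" where
  "dir_max G \<theta> x = (SUP k::int. seg_avg G ((2 powr real_of_int k) *\<^sub>R \<theta>) x)"

lemma dir_max_measurable [measurable (raw)]:
  assumes [measurable]: "G \<in> borel_measurable borel" "u \<in> borel_measurable N" "v \<in> borel_measurable N"
  shows "(\<lambda>z. dir_max G (u z) (v z)) \<in> borel_measurable N"
  unfolding dir_max_def seg_avg_def by measurable

\<comment> \<open>Negative scales are reached by rescaling the direction: \<open>2^(j - K) \<theta> = 2^j (2^-K \<theta>)\<close>.\<close>
lemma dir_max_Lp_bound:
  fixes G :: "'a::euclidean_space \<Rightarrow> real"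
  assumes p: "p > 1" and G[measurable]: "G \<in> borel_measurable borel" and G0: "\<And>y. G y \<ge> 0"
  shows "(\<integral>\<^sup>+ x. enn_powr (dir_max G \<theta> x) p \<partial>lborel)
      \<le> ennreal (4 powr p * p / (p - 1)) * (\<integral>\<^sup>+ y. ennreal (G y powr p) \<partial>lborel)"
proof -
  have p0: "p > 0" using p by simp
  define S where "S K x = (SUP j::nat. seg_avg G ((2::real)^j *\<^sub>R ((2 powr - real K) *\<^sub>R \<theta>)) x)" for K x
  have S_shift: "S K x = (SUP j::nat. seg_avg G ((2 powr real_of_int (int j - int K)) *\<^sub>R \<theta>) x)" for K x
  proof -
    have "2 powr real_of_int (int j - int K) = (2::real)^j * 2 powr - real K" for j
      by (simp add: powr_add[symmetric] powr_realpow[symmetric])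
    then show ?thesis unfolding S_def by simp
  qed
  have [measurable]: "S K \<in> borel_measurable borel" for K
    unfolding S_def by measurable
  have "incseq (\<lambda>K x. enn_powr (S K x) p)"
    using incseq_SUP_shift[of "\<lambda>k. seg_avg G ((2 powr real_of_int k) *\<^sub>R \<theta>) _"]
    by (auto simp: incseq_def le_fun_def S_shift intro!: enn_powr_mono[OF p0])
  moreover have "enn_powr (dir_max G \<theta> x) p = (SUP K. enn_powr (S K x) p)" for x
    unfolding dir_max_def S_shift SUP_int_eq_SUP_shift by (simp add: enn_powr_Sup[OF p0] image_comp)
  ultimately have "(\<integral>\<^sup>+ x. enn_powr (dir_max G \<theta> x) p \<partial>lborel) = (SUP K. \<integral>\<^sup>+ x. enn_powr (S K x) p \<partial>lborel)"
    by (simp add: nn_integral_monotone_convergence_SUP)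
  also have "\<dots> \<le> ennreal (4 powr p * p / (p - 1)) * (\<integral>\<^sup>+ y. ennreal (G y powr p) \<partial>lborel)"
    unfolding S_def by (rule SUP_least) (rule dyadic_seg_max_Lp_bound[OF p G G0])
  finally show ?thesis .
qed

section \<open>Polar coordinates\<close>

definition cone_of :: "'a::euclidean_space set \<Rightarrow> 'a set" where
  "cone_of B = {z. z \<noteq> 0 \<and> z /\<^sub>R norm z \<in> B}"

lemma normalize_measurable:
  "(\<lambda>x::'a::euclidean_space. x /\<^sub>R norm x) \<in> measurable (restrict_space lborel (ball 0 1 - {0})) (restrict_space borel (sphere 0 1))"
proof (rule measurable_restrict_space2)
  show "(\<lambda>x::'a. x /\<^sub>R norm x) \<in> space (restrict_space lborel (ball 0 1 - {0})) \<rightarrow> sphere 0 1"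
    by (auto simp: space_restrict_space)
  show "(\<lambda>x::'a. x /\<^sub>R norm x) \<in> restrict_space lborel (ball 0 1 - {0}) \<rightarrow>\<^sub>M borel"
    by (rule measurable_restrict_space1) simp
qed

lemma sets_sphere_measure [measurable_cong]: "sets (sphere_measure :: 'a::euclidean_space measure) = sets (restrict_space borel (sphere (0::'a) 1))"
  unfolding sphere_measure_def by simp

lemma space_sphere_measure: "space (sphere_measure :: 'a::euclidean_space measure) = sphere (0::'a) 1"
  unfolding sphere_measure_def by (simp add: space_restrict_space)

lemma cone_of_sets: assumes "B \<in> sets (restrict_space borel (sphere (0::'a::euclidean_space) 1))"
  shows "cone_of B \<in> sets borel"
proof -
  obtain B' where B': "B' \<in> sets borel" "B = sphere 0 1 \<inter> B'" using assms by (auto simp: sets_restrict_space)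
  have "cone_of B = (\<lambda>z. z /\<^sub>R norm z) -` B' \<inter> (- {0})"
    unfolding cone_of_def B' by auto
  also have "\<dots> \<in> sets borel" using B'(1) by measurable
  finally show ?thesis .
qed

lemma emeasure_sphere_measure:
  assumes B: "B \<in> sets (sphere_measure :: 'a::euclidean_space measure)"
  shows "emeasure sphere_measure B = of_nat DIM('a) * emeasure lborel (cone_of B \<inter> ball 0 1)"
proof -
  let ?R = "restrict_space lborel (ball (0::'a) 1 - {0})"
  have B': "B \<in> sets (restrict_space borel (sphere (0::'a) 1))" using B by (simp add: sets_sphere_measure)
  have "emeasure sphere_measure B = (\<integral>\<^sup>+ x. ennreal (real DIM('a)) * indicator B x
      \<partial>distr ?R (restrict_space borel (sphere 0 1)) (\<lambda>x. x /\<^sub>R norm x))"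
    unfolding sphere_measure_def by (subst emeasure_density) (use B' in auto)
  also have "\<dots> = ennreal (real DIM('a)) * emeasure (distr ?R (restrict_space borel (sphere 0 1)) (\<lambda>x. x /\<^sub>R norm x)) B"
    using B' by (simp add: nn_integral_cmult_indicator)
  also have "emeasure (distr ?R (restrict_space borel (sphere 0 1)) (\<lambda>x. x /\<^sub>R norm x)) B
      = emeasure ?R ((\<lambda>x. x /\<^sub>R norm x) -` B \<inter> space ?R)"
    by (rule emeasure_distr[OF normalize_measurable B'])
  also have "(\<lambda>x. x /\<^sub>R norm x) -` B \<inter> space ?R = cone_of B \<inter> ball 0 1"
    by (auto simp: space_restrict_space cone_of_def)
  also have "emeasure ?R (cone_of B \<inter> ball 0 1) = emeasure lborel (cone_of B \<inter> ball 0 1)"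
    by (rule emeasure_restrict_space) (auto simp: cone_of_def)
  finally show ?thesis by (simp add: ennreal_of_nat_eq_real_of_nat)
qed

lemma scaleR_mem_cone_of_iff:
  assumes "t > 0" shows "t *\<^sub>R x \<in> cone_of B \<longleftrightarrow> x \<in> cone_of B"
proof -
  have "(t *\<^sub>R x) /\<^sub>R norm (t *\<^sub>R x) = x /\<^sub>R norm x"
    using assms by (cases "x = 0") (simp_all add: field_simps)
  then show ?thesis using assms unfolding cone_of_def mem_Collect_eq by (simp only:) simp
qed

lemma emeasure_cone_of_ball:
  fixes B :: "'a::euclidean_space set"
  assumes t: "t > 0" and [measurable]: "cone_of B \<in> sets borel"
  shows "emeasure lborel (cone_of B \<inter> ball 0 t) = ennreal (t ^ DIM('a)) * emeasure lborel (cone_of B \<inter> ball 0 1)"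
proof -
  have "emeasure lborel (cone_of B \<inter> ball 0 t)
      = ennreal (t ^ DIM('a)) * (\<integral>\<^sup>+x. indicator (cone_of B \<inter> ball 0 t) (t *\<^sub>R x) \<partial>lborel)"
  proof -
    have "cone_of B \<inter> ball 0 t \<in> sets borel" by simp
    then have "indicator (cone_of B \<inter> ball 0 t) \<in> borel_measurable (borel :: 'a measure)"
      by (rule borel_measurable_indicator)
    from nn_integral_lborel_affine[OF this, of t 0] show ?thesis using t by simp
  qed
  also have "(\<lambda>x. indicator (cone_of B \<inter> ball 0 t) (t *\<^sub>R x) :: ennreal) = indicator (cone_of B \<inter> ball 0 1)"
    using t by (auto simp: indicator_def scaleR_mem_cone_of_iff)
  finally show ?thesis by simp
qed

definition radial_measure :: "nat \<Rightarrow> real measure" where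
  "radial_measure n = density lborel (\<lambda>r. ennreal (r ^ (n - 1)) * indicator {0<..} r)"

lemma sets_radial_measure[simp, measurable_cong]: "sets (radial_measure n) = sets borel"
  unfolding radial_measure_def by simp

lemma emeasure_radial_measure_lessThan:
  assumes n: "n \<ge> 1"
  shows "emeasure (radial_measure n) {..<b} = (if b > 0 then ennreal (b ^ n / n) else 0)"
proof -
  have "emeasure (radial_measure n) {..<b} = (\<integral>\<^sup>+ r. ennreal (r ^ (n - 1)) * indicator {0<..} r * indicator {..<b} r \<partial>lborel)"
    unfolding radial_measure_def by (subst emeasure_density) auto
  also have "\<dots> = (\<integral>\<^sup>+ r. ennreal (indicator {0..<b} r * r powr (real n - 1)) \<partial>lborel)"
  proof (rule nn_integral_cong)
    fix r :: real
    show "ennreal (r ^ (n - 1)) * indicator {0<..} r * indicator {..<b} r = ennreal (indicator {0..<b} r * r powr (real n - 1))"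
    proof (cases "r > 0")
      case True
      have "r powr (real n - 1) = r ^ (n - 1)"
        using True n by (simp add: powr_realpow[symmetric] of_nat_diff)
      then show ?thesis using True by (simp add: indicator_def)
    next
      case False
      then show ?thesis by (cases "r = 0") (auto simp: indicator_def)
    qed
  qed
  also have "\<dots> = (if b > 0 then ennreal (b ^ n / n) else 0)"
  proof (cases "b > 0")
    case True
    have "(\<integral>\<^sup>+ r. ennreal (indicator {0..<b} r * r powr (real n - 1)) \<partial>lborel) = ennreal (b powr real n / real n)"
      by (rule nn_integral_indicator_powr) (use True n in auto)
    then show ?thesis using True by (simp add: powr_realpow)
  next
    case False
    then have "indicator {0..<b} r = (0::real)" for r by (auto simp: indicator_def)
    then show ?thesis using False by simp
  qed
  finally show ?thesis .
qed

lemma sets_borel_Iio: "sets (borel :: real measure) = sigma_sets UNIV (range lessThan)"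
  by (subst borel_Iio) (simp add: sets_measure_of)

lemma emeasure_cone_of_ball_polar:
  fixes B :: "'a::euclidean_space set"
  assumes B: "B \<in> sets (sphere_measure :: 'a measure)"
  shows "emeasure lborel (cone_of B \<inter> ball 0 b) = emeasure (radial_measure DIM('a)) {..<b} * emeasure sphere_measure B"
proof (cases "b > 0")
  case True
  have n: "DIM('a) \<ge> 1" by (simp add: DIM_positive Suc_leI)
  have "cone_of B \<in> sets borel" using B by (intro cone_of_sets) (simp add: sets_sphere_measure)
  then have "emeasure lborel (cone_of B \<inter> ball 0 b) = ennreal (b ^ DIM('a)) * emeasure lborel (cone_of B \<inter> ball 0 1)"
    by (rule emeasure_cone_of_ball[OF True])
  also have "\<dots> = ennreal (b ^ DIM('a) / DIM('a)) * (of_nat DIM('a) * emeasure lborel (cone_of B \<inter> ball 0 1))"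
  proof -
    have "ennreal (b ^ DIM('a) / DIM('a)) * ennreal (real DIM('a)) = ennreal (b ^ DIM('a))"
      using n True by (simp add: ennreal_mult[symmetric])
    then show ?thesis by (simp add: mult.assoc[symmetric] ennreal_of_nat_eq_real_of_nat)
  qed
  also have "\<dots> = emeasure (radial_measure DIM('a)) {..<b} * emeasure sphere_measure B"
    using True n by (simp add: emeasure_radial_measure_lessThan emeasure_sphere_measure[OF B])
  finally show ?thesis .
next
  case False
  then have "ball (0::'a) b = {}" by simp
  then show ?thesis using False by (simp add: emeasure_radial_measure_lessThan DIM_positive Suc_leI del: ball_eq_empty)
qed

\<comment> \<open>Both sides are measures in \<open>A\<close> that agree on the half-lines \<open>{..<b}\<close>.\<close>
lemma emeasure_cone_of_norm_vimage:
  fixes B :: "'a::euclidean_space set"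
  assumes B: "B \<in> sets (sphere_measure :: 'a measure)" and A: "A \<in> sets (borel :: real measure)"
  shows "emeasure lborel (cone_of B \<inter> norm -` A) = emeasure (radial_measure DIM('a)) A * emeasure sphere_measure B"
proof -
  have [measurable]: "cone_of B \<in> sets borel"
    using B by (intro cone_of_sets) (simp add: sets_sphere_measure)
  define M1 where "M1 = distr (restrict_space lborel (cone_of B)) (borel :: real measure) norm"
  define M2 where "M2 = density (radial_measure DIM('a)) (\<lambda>_. emeasure sphere_measure B)"
  have M1: "emeasure M1 X = emeasure lborel (cone_of B \<inter> norm -` X)" if X: "X \<in> sets borel" for X
  proof -
    have "emeasure M1 X = emeasure (restrict_space lborel (cone_of B)) (norm -` X \<inter> space (restrict_space lborel (cone_of B)))"
      unfolding M1_def by (rule emeasure_distr) (auto intro: measurable_restrict_space1 X)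
    also have "\<dots> = emeasure lborel (norm -` X \<inter> cone_of B)"
      by (subst emeasure_restrict_space) (auto simp: space_restrict_space)
    finally show ?thesis by (simp add: Int_commute)
  qed
  have M2: "emeasure M2 X = emeasure (radial_measure DIM('a)) X * emeasure sphere_measure B" if "X \<in> sets borel" for X
    unfolding M2_def using that by (subst emeasure_density_const) (auto simp: mult.commute)
  have ball: "cone_of B \<inter> norm -` {..<b} = cone_of B \<inter> ball 0 b" for b by auto
  have "M1 = M2"
  proof (rule measure_eqI_generator_eq[where E="range lessThan" and \<Omega>=UNIV and A="\<lambda>i. {..<real i}"])
    show "Int_stable (range lessThan :: real set set)"
    proof (clarsimp simp: Int_stable_def)
      fix a b :: real
      have "{..<a} \<inter> {..<b} = {..<min a b}" by auto
      then show "{..<a} \<inter> {..<b} \<in> range lessThan" by (metis rangeI)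
    qed
    show "sets M1 = sigma_sets UNIV (range lessThan)" "sets M2 = sigma_sets UNIV (range lessThan)"
      unfolding M1_def M2_def by (simp_all add: sets_borel_Iio)
    show "emeasure M1 {..<real i} \<noteq> \<infinity>" for i
    proof -
      have "emeasure M1 {..<real i} = emeasure lborel (cone_of B \<inter> ball 0 (real i))"
        using M1[of "{..<real i}"] ball by simp
      also have "\<dots> \<le> emeasure lborel (ball (0::'a) (real i))"
        by (rule emeasure_mono) auto
      also have "\<dots> < \<infinity>" by (rule emeasure_lborel_ball_finite)
      finally show ?thesis by simp
    qed
    show "X \<in> range lessThan \<Longrightarrow> emeasure M1 X = emeasure M2 X" for X
      by (auto simp: M1 M2 ball emeasure_cone_of_ball_polar[OF B])
  qed (auto intro: reals_Archimedean2)
  then show ?thesis using M1[OF A] M2[OF A] by simp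
qed

definition sphere_point :: "'a::euclidean_space" where "sphere_point = (SOME e. e \<in> sphere 0 1)"

lemma sphere_point_in_sphere: "(sphere_point :: 'a::euclidean_space) \<in> sphere 0 1"
proof -
  have "sphere (0::'a) 1 \<noteq> {}" by simp
  then show ?thesis unfolding sphere_point_def by (metis ex_in_conv someI)
qed

definition polar :: "'a::euclidean_space \<Rightarrow> real \<times> 'a" where
  "polar z = (norm z, if z = 0 then sphere_point else z /\<^sub>R norm z)"

lemma sigma_finite_radial_measure: "sigma_finite_measure (radial_measure n)"
  unfolding radial_measure_def
  by (subst sigma_finite_measure.sigma_finite_iff_density_finite'[OF sigma_finite_lborel])
     (auto simp: indicator_def ennreal_mult_eq_top_iff)

lemma finite_sphere_measure: "finite_measure (sphere_measure :: 'a::euclidean_space measure)"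
proof (rule finite_measureI)
  have "emeasure (sphere_measure :: 'a measure) (space sphere_measure)
      = of_nat DIM('a) * emeasure lborel (cone_of (space (sphere_measure :: 'a measure)) \<inter> ball 0 1)"
    by (rule emeasure_sphere_measure) simp
  also have "\<dots> \<le> of_nat DIM('a) * emeasure lborel (ball (0::'a) 1)"
    by (intro mult_left_mono emeasure_mono) auto
  also have "\<dots> < \<infinity>"
    using emeasure_lborel_ball_finite[of "0::'a" 1] by (simp add: ennreal_mult_less_top of_nat_less_top)
  finally show "emeasure (sphere_measure :: 'a measure) (space sphere_measure) \<noteq> \<infinity>" by simp
qed

lemma sigma_finite_sphere_measure: "sigma_finite_measure (sphere_measure :: 'a::euclidean_space measure)"
  using finite_sphere_measure by (auto simp: finite_measure_def)

lemma polar_measurable: "polar \<in> measurable lborel (radial_measure n \<Otimes>\<^sub>M (sphere_measure :: 'a::euclidean_space measure))"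
proof -
  have 2: "(\<lambda>z::'a. if z = 0 then sphere_point else z /\<^sub>R norm z) \<in> measurable lborel sphere_measure"
    unfolding measurable_cong_sets[OF refl sets_sphere_measure]
  proof (rule measurable_restrict_space2)
    show "(\<lambda>z::'a. if z = 0 then sphere_point else z /\<^sub>R norm z) \<in> space lborel \<rightarrow> sphere 0 1"
      using sphere_point_in_sphere by auto
    show "(\<lambda>z::'a. if z = 0 then sphere_point else z /\<^sub>R norm z) \<in> borel_measurable lborel" by measurable
  qed
  show ?thesis unfolding polar_def
    by (intro measurable_Pair 2) (simp add: measurable_cong_sets[OF refl sets_radial_measure])
qed

lemma id_sphere_measurable[measurable]:
  "(\<lambda>x. x) \<in> borel_measurable (sphere_measure :: 'a::euclidean_space measure)"
  unfolding measurable_cong_sets[OF sets_sphere_measure refl]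
  by (rule measurable_restrict_space1) simp

lemma distr_lborel_polar:
  "radial_measure DIM('a) \<Otimes>\<^sub>M (sphere_measure :: 'a::euclidean_space measure)
     = distr lborel (radial_measure DIM('a) \<Otimes>\<^sub>M (sphere_measure :: 'a measure)) polar"
proof (rule pair_measure_eqI)
  show "sigma_finite_measure (radial_measure DIM('a))" by (rule sigma_finite_radial_measure)
  show "sigma_finite_measure (sphere_measure :: 'a measure)" by (rule sigma_finite_sphere_measure)
  show "sets (radial_measure DIM('a) \<Otimes>\<^sub>M sphere_measure) = sets (distr lborel (radial_measure DIM('a) \<Otimes>\<^sub>M (sphere_measure :: 'a measure)) polar)"
    by simp
  fix A B assume A: "A \<in> sets (radial_measure DIM('a))" and B: "B \<in> sets (sphere_measure :: 'a measure)"
  have AB: "A \<times> B \<in> sets (radial_measure DIM('a) \<Otimes>\<^sub>M (sphere_measure :: 'a measure))" using A B by simp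
  have B': "B \<in> sets (restrict_space borel (sphere (0::'a) 1))" using B by (simp add: sets_sphere_measure)
  have CB[measurable]: "cone_of B \<in> sets borel" by (rule cone_of_sets[OF B'])
  have A'[measurable]: "A \<in> sets borel" using A by simp
  have "emeasure (distr lborel (radial_measure DIM('a) \<Otimes>\<^sub>M (sphere_measure :: 'a measure)) polar) (A \<times> B)
      = emeasure lborel (polar -` (A \<times> B) \<inter> space lborel)"
    by (rule emeasure_distr[OF polar_measurable AB])
  also have "polar -` (A \<times> B) \<inter> space lborel = (cone_of B \<inter> norm -` A) \<union> ({0} \<inter> polar -` (A \<times> B))"
    by (auto simp: polar_def cone_of_def)
  also have "emeasure lborel \<dots> = emeasure lborel (cone_of B \<inter> norm -` A)"
    by (rule emeasure_Un_null_set) (auto intro: finite_imp_null_set_lborel finite_subset[of _ "{0}"])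
  also have "\<dots> = emeasure (radial_measure DIM('a)) A * emeasure sphere_measure B"
    by (rule emeasure_cone_of_norm_vimage[OF B A'])
  finally show "emeasure (radial_measure DIM('a)) A * emeasure sphere_measure B
      = emeasure (distr lborel (radial_measure DIM('a) \<Otimes>\<^sub>M (sphere_measure :: 'a measure)) polar) (A \<times> B)" by simp
qed

lemma nn_integral_polar:
  fixes g :: "'a::euclidean_space \<Rightarrow> ennreal"
  assumes g[measurable]: "g \<in> borel_measurable borel"
  shows "(\<integral>\<^sup>+z. g z \<partial>lborel) = (\<integral>\<^sup>+\<theta>. (\<integral>\<^sup>+r. g (r *\<^sub>R \<theta>) \<partial>radial_measure DIM('a)) \<partial>sphere_measure)"
proof -
  interpret pair_sigma_finite "radial_measure DIM('a)" "sphere_measure :: 'a measure"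
    unfolding pair_sigma_finite_def using sigma_finite_radial_measure sigma_finite_sphere_measure by blast
  have gm: "(\<lambda>x. g (fst x *\<^sub>R snd x)) \<in> borel_measurable (radial_measure DIM('a) \<Otimes>\<^sub>M (sphere_measure :: 'a measure))"
    by measurable
  have "(\<integral>\<^sup>+z. g z \<partial>lborel) = (\<integral>\<^sup>+z. g (fst (polar z) *\<^sub>R snd (polar z)) \<partial>lborel)"
    by (intro nn_integral_cong) (simp add: polar_def)
  also have "\<dots> = (\<integral>\<^sup>+x. g (fst x *\<^sub>R snd x) \<partial>distr lborel (radial_measure DIM('a) \<Otimes>\<^sub>M (sphere_measure :: 'a measure)) polar)"
    using polar_measurable[where 'a='a and n="DIM('a)"] by (intro nn_integral_distr[symmetric]) (simp_all add: gm)
  also have "\<dots> = (\<integral>\<^sup>+x. g (fst x *\<^sub>R snd x) \<partial>(radial_measure DIM('a) \<Otimes>\<^sub>M (sphere_measure :: 'a measure)))"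
    by (simp only: distr_lborel_polar[symmetric])
  also have "\<dots> = (\<integral>\<^sup>+\<theta>. (\<integral>\<^sup>+r. g (r *\<^sub>R \<theta>) \<partial>radial_measure DIM('a)) \<partial>sphere_measure)"
    using nn_integral_snd[OF gm] by simp
  finally show ?thesis .
qed

section \<open>The method of rotations\<close>

\<comment> \<open>\<open>\<Omega>\<close> is only measurable on the sphere; its extension by zero is Borel measurable on the
  whole space.\<close>
definition zero_ext :: "('a::euclidean_space \<Rightarrow> real) \<Rightarrow> 'a \<Rightarrow> real" where
  "zero_ext \<Omega> \<theta> = indicator (sphere 0 1) \<theta> *\<^sub>R \<Omega> \<theta>"

lemma zero_ext_measurable:
  assumes "\<Omega> \<in> borel_measurable (sphere_measure :: 'a::euclidean_space measure)"
  shows "zero_ext \<Omega> \<in> borel_measurable (borel :: 'a measure)"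
proof -
  have "\<Omega> \<in> borel_measurable (restrict_space borel (sphere (0::'a) 1))"
    using assms by (simp add: measurable_cong_sets[OF sets_sphere_measure refl])
  then show ?thesis unfolding zero_ext_def
    by (subst (asm) borel_measurable_restrict_space_iff) auto
qed

lemma sigma_k_zero_ext:
  fixes \<Omega> :: "'a::euclidean_space \<Rightarrow> real"
  shows "sigma_k (zero_ext \<Omega>) k = sigma_k \<Omega> k"
proof
  fix z :: 'a
  have "z /\<^sub>R norm z \<in> sphere 0 1" if "2 powr real_of_int k \<le> norm z"
  proof -
    have "norm z > 0" using that powr_gt_zero[of 2 "real_of_int k"] by linarith
    then show ?thesis by simp
  qed
  then show "sigma_k (zero_ext \<Omega>) k z = sigma_k \<Omega> k z"
    unfolding sigma_k_def zero_ext_def by (auto simp: indicator_def)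
qed

lemma sigma_k_measurable [measurable]:
  assumes [measurable]: "\<Omega> \<in> borel_measurable (borel :: 'a::euclidean_space measure)"
  shows "sigma_k \<Omega> k \<in> borel_measurable (borel :: 'a measure)"
  unfolding sigma_k_def by measurable

\<comment> \<open>The Jacobian \<open>r^(n-1)\<close> of polar coordinates cancels \<open>|x|^-n\<close> up to \<open>1/r \<le> 2^-k\<close>.\<close>
lemma sigma_k_radial_le:
  fixes \<theta> :: "'a::euclidean_space"
  assumes \<theta>: "norm \<theta> = 1" and r: "r > 0"
  shows "r ^ (DIM('a) - 1) * \<bar>sigma_k \<Omega> k (r *\<^sub>R \<theta>)\<bar>
    \<le> \<bar>\<Omega> \<theta>\<bar> / 2 powr real_of_int k * indicator {2 powr real_of_int k..2 * 2 powr real_of_int k} r"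
proof -
  define c :: real where "c = 2 powr real_of_int k"
  have c: "c > 0" "2 powr real_of_int (k + 1) = 2 * c"
    unfolding c_def by (simp_all add: powr_add)
  have norm_r\<theta>: "norm (r *\<^sub>R \<theta>) = r" "(r *\<^sub>R \<theta>) /\<^sub>R r = \<theta>"
    using \<theta> r by simp_all
  show ?thesis
  proof (cases "r \<in> {c..2*c}")
    case True
    have "r ^ DIM('a) = r ^ (DIM('a) - 1) * r"
      by (metis DIM_positive Suc_diff_1 power_Suc2)
    then have "r ^ (DIM('a) - 1) * \<bar>sigma_k \<Omega> k (r *\<^sub>R \<theta>)\<bar> = \<bar>\<Omega> \<theta>\<bar> / r"
      using True r c unfolding sigma_k_def c_def[symmetric] norm_r\<theta> by (simp add: abs_divide)
    also have "\<dots> \<le> \<bar>\<Omega> \<theta>\<bar> / c"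
      using True c by (intro divide_left_mono) auto
    finally show ?thesis using True unfolding c_def by simp
  next
    case False
    then show ?thesis unfolding sigma_k_def c(2) c_def[symmetric] norm_r\<theta> by auto
  qed
qed

lemma nn_integral_radial_sigma_k_le:
  fixes \<theta> :: "'a::euclidean_space" and G :: "'a \<Rightarrow> real"
  assumes \<theta>: "norm \<theta> = 1" and [measurable]: "G \<in> borel_measurable borel" and G0: "\<And>y. G y \<ge> 0"
    and [measurable]: "\<Omega> \<in> borel_measurable borel"
  shows "(\<integral>\<^sup>+r. ennreal (\<bar>sigma_k \<Omega> k (r *\<^sub>R \<theta>)\<bar> * G (x - r *\<^sub>R \<theta>)) \<partial>radial_measure DIM('a))
    \<le> ennreal \<bar>\<Omega> \<theta>\<bar> * seg_avg G ((2 powr real_of_int k) *\<^sub>R \<theta>) x"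
proof -
  define c :: real where "c = 2 powr real_of_int k"
  have c: "c > 0" unfolding c_def by simp
  have "(\<integral>\<^sup>+r. ennreal (\<bar>sigma_k \<Omega> k (r *\<^sub>R \<theta>)\<bar> * G (x - r *\<^sub>R \<theta>)) \<partial>radial_measure DIM('a))
      = (\<integral>\<^sup>+r. ennreal (r ^ (DIM('a) - 1)) * indicator {0<..} r
          * ennreal (\<bar>sigma_k \<Omega> k (r *\<^sub>R \<theta>)\<bar> * G (x - r *\<^sub>R \<theta>)) \<partial>lborel)"
    unfolding radial_measure_def by (subst nn_integral_density) (auto simp: mult.assoc)
  also have "\<dots> \<le> (\<integral>\<^sup>+r. ennreal (\<bar>\<Omega> \<theta>\<bar> / c) * (ennreal (G (x - r *\<^sub>R \<theta>)) * indicator {c..2*c} r) \<partial>lborel)"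
  proof (rule nn_integral_mono)
    fix r :: real
    show "ennreal (r ^ (DIM('a) - 1)) * indicator {0<..} r * ennreal (\<bar>sigma_k \<Omega> k (r *\<^sub>R \<theta>)\<bar> * G (x - r *\<^sub>R \<theta>))
      \<le> ennreal (\<bar>\<Omega> \<theta>\<bar> / c) * (ennreal (G (x - r *\<^sub>R \<theta>)) * indicator {c..2*c} r)"
    proof (cases "r > 0")
      case True
      have "ennreal (r ^ (DIM('a) - 1)) * indicator {0<..} r * ennreal (\<bar>sigma_k \<Omega> k (r *\<^sub>R \<theta>)\<bar> * G (x - r *\<^sub>R \<theta>))
          = ennreal (r ^ (DIM('a) - 1) * \<bar>sigma_k \<Omega> k (r *\<^sub>R \<theta>)\<bar>) * ennreal (G (x - r *\<^sub>R \<theta>))"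
        using True G0 by (simp add: ennreal_mult[symmetric] mult.assoc)
      also have "\<dots> \<le> ennreal (\<bar>\<Omega> \<theta>\<bar> / c * indicator {c..2*c} r) * ennreal (G (x - r *\<^sub>R \<theta>))"
        using sigma_k_radial_le[OF \<theta> True, of \<Omega> k] unfolding c_def by (intro mult_right_mono ennreal_leI) auto
      also have "\<dots> = ennreal (\<bar>\<Omega> \<theta>\<bar> / c) * (ennreal (G (x - r *\<^sub>R \<theta>)) * indicator {c..2*c} r)"
        using c by (simp add: indicator_def)
      finally show ?thesis .
    qed simp
  qed
  also have "\<dots> = ennreal (\<bar>\<Omega> \<theta>\<bar> / c) * (ennreal c * seg_avg G (c *\<^sub>R \<theta>) x)"
    by (subst nn_integral_cmult) (simp_all add: seg_avg_rescale[OF c])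
  also have "\<dots> = ennreal \<bar>\<Omega> \<theta>\<bar> * seg_avg G (c *\<^sub>R \<theta>) x"
    using c by (simp add: mult.assoc[symmetric] ennreal_mult[symmetric])
  finally show ?thesis unfolding c_def .
qed

lemma sigma_k_conv_le_rotation:
  fixes \<Omega> G :: "'a::euclidean_space \<Rightarrow> real"
  assumes \<Omega>: "\<Omega> \<in> borel_measurable (sphere_measure :: 'a measure)"
    and [measurable]: "G \<in> borel_measurable borel" and G0: "\<And>y. G y \<ge> 0"
  shows "(\<integral>\<^sup>+ y. ennreal (\<bar>sigma_k \<Omega> k (x - y)\<bar> * G y) \<partial>lborel)
      \<le> (\<integral>\<^sup>+ \<theta>. ennreal \<bar>\<Omega> \<theta>\<bar> * seg_avg G ((2 powr real_of_int k) *\<^sub>R \<theta>) x \<partial>sphere_measure)"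
proof -
  have [measurable]: "zero_ext \<Omega> \<in> borel_measurable borel" by (rule zero_ext_measurable[OF \<Omega>])
  define F where "F z = ennreal (\<bar>sigma_k (zero_ext \<Omega>) k z\<bar> * G (x - z))" for z
  have [measurable]: "F \<in> borel_measurable borel" unfolding F_def by measurable
  have "(\<integral>\<^sup>+ y. ennreal (\<bar>sigma_k \<Omega> k (x - y)\<bar> * G y) \<partial>lborel) = (\<integral>\<^sup>+ y. F (x - y) \<partial>lborel)"
    unfolding F_def by (simp add: sigma_k_zero_ext)
  also have "\<dots> = (\<integral>\<^sup>+\<theta>. (\<integral>\<^sup>+r. F (r *\<^sub>R \<theta>) \<partial>radial_measure DIM('a)) \<partial>sphere_measure)"
    by (simp add: nn_integral_lborel_reflect nn_integral_polar)
  also have "\<dots> \<le> (\<integral>\<^sup>+ \<theta>. ennreal \<bar>\<Omega> \<theta>\<bar> * seg_avg G ((2 powr real_of_int k) *\<^sub>R \<theta>) x \<partial>sphere_measure)"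
  proof (rule nn_integral_mono)
    fix \<theta> :: 'a assume "\<theta> \<in> space sphere_measure"
    then have \<theta>: "norm \<theta> = 1" by (simp add: space_sphere_measure)
    then have "zero_ext \<Omega> \<theta> = \<Omega> \<theta>" by (simp add: zero_ext_def)
    then show "(\<integral>\<^sup>+r. F (r *\<^sub>R \<theta>) \<partial>radial_measure DIM('a))
      \<le> ennreal \<bar>\<Omega> \<theta>\<bar> * seg_avg G ((2 powr real_of_int k) *\<^sub>R \<theta>) x"
      using nn_integral_radial_sigma_k_le[OF \<theta>, of G "zero_ext \<Omega>" k x] G0 unfolding F_def by simp
  qed
  finally show ?thesis .
qed

lemma sigma_star_le_rotation:
  fixes \<Omega> G :: "'a::euclidean_space \<Rightarrow> real"
  assumes \<Omega>: "\<Omega> \<in> borel_measurable (sphere_measure :: 'a measure)"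
    and G: "G \<in> borel_measurable borel" "\<And>y. G y \<ge> 0" and fG: "AE y in lborel. \<bar>f y\<bar> = G y"
  shows "sigma_star \<Omega> f x \<le> (\<integral>\<^sup>+\<theta>. ennreal \<bar>\<Omega> \<theta>\<bar> * dir_max G \<theta> x \<partial>sphere_measure)"
  unfolding sigma_star_def
proof (rule SUP_least)
  fix k :: int
  have "(\<integral>\<^sup>+ y. ennreal (\<bar>sigma_k \<Omega> k (x - y)\<bar> * \<bar>f y\<bar>) \<partial>lebesgue)
      = (\<integral>\<^sup>+ y. ennreal (\<bar>sigma_k \<Omega> k (x - y)\<bar> * G y) \<partial>lborel)"
    unfolding nn_integral_completion by (rule nn_integral_cong_AE) (use fG in auto)
  also have "\<dots> \<le> (\<integral>\<^sup>+ \<theta>. ennreal \<bar>\<Omega> \<theta>\<bar> * seg_avg G ((2 powr real_of_int k) *\<^sub>R \<theta>) x \<partial>sphere_measure)"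
    by (rule sigma_k_conv_le_rotation[OF \<Omega> G])
  also have "\<dots> \<le> (\<integral>\<^sup>+\<theta>. ennreal \<bar>\<Omega> \<theta>\<bar> * dir_max G \<theta> x \<partial>sphere_measure)"
    unfolding dir_max_def by (intro nn_integral_mono mult_left_mono SUP_upper) auto
  finally show "(\<integral>\<^sup>+ y. ennreal (\<bar>sigma_k \<Omega> k (x - y)\<bar> * \<bar>f y\<bar>) \<partial>lebesgue)
      \<le> (\<integral>\<^sup>+\<theta>. ennreal \<bar>\<Omega> \<theta>\<bar> * dir_max G \<theta> x \<partial>sphere_measure)" .
qed

\<comment> \<open>Jensen for the finite measure \<open>|\<Omega>| d\<theta>\<close>, then Fubini and the uniform bound on the directional
  maximal functions.\<close>
lemma nn_integral_sigma_star_powr_le: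
  fixes \<Omega> G :: "'a::euclidean_space \<Rightarrow> real"
  assumes p: "p > 1" and \<Omega>[measurable]: "\<Omega> \<in> borel_measurable (sphere_measure :: 'a measure)"
    and G[measurable]: "G \<in> borel_measurable borel" and G0: "\<And>y. G y \<ge> 0"
    and fG: "AE y in lborel. \<bar>f y\<bar> = G y"
  shows "(\<integral>\<^sup>+ x. enn_powr (sigma_star \<Omega> f x) p \<partial>lebesgue)
    \<le> enn_powr (\<integral>\<^sup>+\<theta>. ennreal \<bar>\<Omega> \<theta>\<bar> \<partial>sphere_measure) p
      * (ennreal (4 powr p * p / (p - 1)) * (\<integral>\<^sup>+ y. ennreal (G y powr p) \<partial>lborel))"
proof -
  define W where "W = (\<integral>\<^sup>+\<theta>. ennreal \<bar>\<Omega> \<theta>\<bar> \<partial>sphere_measure)"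
  define B where "B = ennreal (4 powr p * p / (p - 1)) * (\<integral>\<^sup>+ y. ennreal (G y powr p) \<partial>lborel)"
  define H where "H \<theta> x = ennreal \<bar>\<Omega> \<theta>\<bar> * enn_powr (dir_max G \<theta> x) p" for \<theta> x
  have p0: "p > 0" using p by simp
  have pointwise: "enn_powr (sigma_star \<Omega> f x) p \<le> enn_powr W (p - 1) * (\<integral>\<^sup>+\<theta>. H \<theta> x \<partial>sphere_measure)" for x
  proof -
    have "enn_powr (sigma_star \<Omega> f x) p
        \<le> enn_powr (\<integral>\<^sup>+\<theta>. ennreal \<bar>\<Omega> \<theta>\<bar> * dir_max G \<theta> x \<partial>sphere_measure) p"
      by (intro enn_powr_mono p0 sigma_star_le_rotation \<Omega> G G0 fG)
    also have "\<dots> \<le> enn_powr W (p - 1) * (\<integral>\<^sup>+\<theta>. H \<theta> x \<partial>sphere_measure)"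
      unfolding W_def H_def by (rule enn_powr_nn_integral_weighted_le[OF p]) measurable
    finally show ?thesis .
  qed
  interpret pair_sigma_finite "sphere_measure :: 'a measure" "lborel :: 'a measure"
    unfolding pair_sigma_finite_def using sigma_finite_sphere_measure sigma_finite_lborel by blast
  have "(\<integral>\<^sup>+ x. enn_powr (sigma_star \<Omega> f x) p \<partial>lebesgue)
      \<le> (\<integral>\<^sup>+ x. enn_powr W (p - 1) * (\<integral>\<^sup>+\<theta>. H \<theta> x \<partial>sphere_measure) \<partial>lborel)"
    unfolding nn_integral_completion by (intro nn_integral_mono pointwise)
  also have "\<dots> = enn_powr W (p - 1) * (\<integral>\<^sup>+ x. (\<integral>\<^sup>+\<theta>. H \<theta> x \<partial>sphere_measure) \<partial>lborel)"
    by (rule nn_integral_cmult) (unfold H_def, measurable)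
  also have "(\<integral>\<^sup>+ x. (\<integral>\<^sup>+\<theta>. H \<theta> x \<partial>sphere_measure) \<partial>lborel)
      = (\<integral>\<^sup>+\<theta>. (\<integral>\<^sup>+ x. H \<theta> x \<partial>lborel) \<partial>sphere_measure)"
  proof -
    have "(\<lambda>(\<theta>, x). H \<theta> x) \<in> borel_measurable (sphere_measure \<Otimes>\<^sub>M lborel)"
      unfolding H_def split_beta' by measurable
    then show ?thesis by (rule Fubini')
  qed
  also have "enn_powr W (p - 1) * (\<integral>\<^sup>+\<theta>. (\<integral>\<^sup>+ x. H \<theta> x \<partial>lborel) \<partial>sphere_measure)
      \<le> enn_powr W (p - 1) * (\<integral>\<^sup>+\<theta>. ennreal \<bar>\<Omega> \<theta>\<bar> * B \<partial>sphere_measure)"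
    unfolding H_def B_def
    by (intro mult_left_mono nn_integral_mono) (simp_all add: nn_integral_cmult mult_left_mono dir_max_Lp_bound[OF p G G0])
  also have "\<dots> = enn_powr W p * B"
    unfolding W_def by (simp add: nn_integral_multc mult.assoc[symmetric] enn_powr_diff_one_mult p)
  finally show ?thesis unfolding W_def B_def .
qed

lemma sigma_star_Lp_bound:
  fixes \<Omega> :: "'a::euclidean_space \<Rightarrow> real" and p :: real
  assumes p: "p > 1" and \<Omega>: "integrable sphere_measure \<Omega>"
  shows "\<exists>C::real. \<forall>f :: 'a \<Rightarrow> real. f \<in> borel_measurable lebesgue \<longrightarrow>
           Lp_norm_enn p (sigma_star \<Omega> f) \<le> ennreal C * Lp_norm p f"
proof -
  define W where "W = (\<integral>\<^sup>+\<theta>. ennreal \<bar>\<Omega> \<theta>\<bar> \<partial>sphere_measure)"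
  define B where "B = 4 powr p * p / (p - 1)"
  have W: "W = ennreal (enn2real W)"
    using \<Omega> unfolding W_def integrable_iff_bounded by (simp add: less_top ennreal_enn2real_if)
  have B: "B \<ge> 0" unfolding B_def using p by simp
  have p0: "p > 0" using p by simp
  show ?thesis
  proof (intro exI[of _ "enn2real W * B powr (1 / p)"] allI impI)
    fix f :: "'a \<Rightarrow> real"
    assume "f \<in> borel_measurable lebesgue"
    then obtain g where [measurable]: "g \<in> borel_measurable lborel" and fg: "AE x in lborel. f x = g x"
      using completion_ex_borel_measurable_real by blast
    have fG: "AE y in lborel. \<bar>f y\<bar> = \<bar>g y\<bar>" using fg by auto
    define Q where "Q = (\<integral>\<^sup>+ x. ennreal (\<bar>f x\<bar> powr p) \<partial>lebesgue)"
    have Q: "Q = (\<integral>\<^sup>+ y. ennreal (\<bar>g y\<bar> powr p) \<partial>lborel)"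
      unfolding Q_def nn_integral_completion by (rule nn_integral_cong_AE) (use fg in auto)
    have "Lp_norm_enn p (sigma_star \<Omega> f) \<le> enn_powr (enn_powr W p * (ennreal B * Q)) (1 / p)"
      unfolding Lp_norm_enn_def W_def B_def Q
      using p0 by (intro enn_powr_mono nn_integral_sigma_star_powr_le p \<Omega>[THEN borel_measurable_integrable] fG) auto
    also have "\<dots> = ennreal (enn2real W * B powr (1 / p)) * Lp_norm p f"
      unfolding Lp_norm_def Q_def[symmetric] using p0 B
      by (subst W) (simp add: enn_powr_mult enn_powr_powr enn_powr_ennreal ennreal_mult mult.assoc powr_powr)
    finally show "Lp_norm_enn p (sigma_star \<Omega> f) \<le> ennreal (enn2real W * B powr (1 / p)) * Lp_norm p f" .
  qed
qed

theorem mainTheorem5: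
  fixes \<Omega> :: "'a::euclidean_space \<Rightarrow> real" and \<alpha> p :: real
  assumes "DIM('a) \<ge> 2"
    and "\<alpha> > 0"
    and "integrable sphere_measure \<Omega>"
    and "(\<integral>\<theta>. \<Omega> \<theta> \<partial>sphere_measure) = 0"
    and "(SUP \<xi>\<in>sphere 0 1. \<integral>\<^sup>+ \<theta>. ennreal (\<bar>\<Omega> \<theta>\<bar> * (ln (1 / \<bar>\<theta> \<bullet> \<xi>\<bar>)) powr (1 + \<alpha>))
            \<partial>sphere_measure) < \<infinity>"
    and "(2 + \<alpha>) / (1 + \<alpha>) < p" and "p < 2 + \<alpha>"
  shows "\<exists>C::real. \<forall>f :: 'a \<Rightarrow> real. f \<in> borel_measurable lebesgue \<longrightarrow>
           (\<integral>\<^sup>+ x. ennreal (\<bar>f x\<bar> powr p) \<partial>lebesgue) < \<infinity> \<longrightarrow>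
           Lp_norm_enn p (sigma_star \<Omega> f) \<le> ennreal C * Lp_norm p f"
proof -
  have "1 < (2 + \<alpha>) / (1 + \<alpha>)" using assms(2) by (simp add: field_simps)
  then have "p > 1" using assms(6) by linarith
  then show ?thesis using sigma_star_Lp_bound[OF _ assms(3)] by blast
qed

end
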